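(* (1) Let $\mathfrak l=\mathbb R^5$ (abelian) with basis dual to $\sigma^1,\dots,\sigma^5$, and $\mathfrak a=0$. Then $\mathcal H^2_Q(\mathfrak l,\mathfrak a)_0/G_{(\mathfrak l,\mathfrak a)}$ consists of exactly one element, represented by $[0,\gamma_0]$ with $\gamma_0=(\sigma^1\wedge\sigma^2+\sigma^3\wedge\sigma^4)\wedge\sigma^5$. (2) Let $\mathfrak l=\mathfrak g_{5,2}$ and $\mathfrak a=0$. Then $\mathcal H^2_Q(\mathfrak l,\mathfrak a)_0/G_{(\mathfrak l,\mathfrak a)}$ consists of exactly two elements, represented by $[0,\gamma_1]$ and $[0,\gamma_2]$ with $\gamma_1=\sigma^1\wedge\sigma^Y\wedge\sigma^Z$ and $\gamma_2=\sigma^1\wedge\sigma^Y\wedge\sigma^Z+\sigma^2\wedge\sigma^3\wedge\sigma^Z$, where $\sigma^1,\sigma^2,\sigma^3,\sigma^Y,\sigma^Z$ is the basis of $\mathfrak l^*$ dual to $X_1,X_2,X_3,Y,Z$.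
   Context: $\mathfrak g_{5,2}$ has basis $X_1,X_2,X_3,Y,Z$ with $[X_1,X_2]=Y$, $[X_1,X_3]=Z$, other brackets of basis vectors zero. For a Lie algebra $\mathfrak l$: $\mathfrak l^1=\mathfrak l$, $\mathfrak l^{k+1}=[\mathfrak l,\mathfrak l^k]$, $\mathfrak z(\mathfrak l)$ the centre. With $\mathfrak a=0$, $\mathcal H^2_Q(\mathfrak l,0)=H^3(\mathfrak l)$ (Lie algebra cohomology with trivial real coefficients), classes written $[0,\gamma]$. Admissibility (here $\alpha=0$): with $\mathfrak l^{m+2}=0$, $\mathfrak l_{(0)}=\mathfrak z(\mathfrak l)$, $\mathfrak l_{(k)}=\mathfrak z(\mathfrak l)\cap\mathfrak l^{k+1}$ ($k\ge1$), $[0,\gamma]$ is admissible iff for all $0\le k\le m$: whenever $L_0\in\mathfrak l_{(k)}$ and there is $Z_0\in(\mathfrak l^{k+1})^*$ with $\gamma(L,L_0,\cdot)=\langle Z_0,[L,\cdot]\rangle$ on $\mathfrak l^{k+1}$ for all $L\in\mathfrak l$, then $L_0=0$ (the nondegeneracy conditions are vacuous). A class $\varphi$ is decomposable if there are a non-trivial Lie algebra direct sum $\mathfrak l=\mathfrak l_1\oplus\mathfrak l_2$ and classes $\varphi_i=[\gamma_i]\in H^3(\mathfrak l_i)$ with $\varphi=q_1^*\varphi_1+q_2^*\varphi_2$ ($q_i$ the projections). $\mathcal H^2_Q(\mathfrak l,\mathfrak a)_0$ denotes the set of admissible indecomposable classes, and $G_{(\mathfrak l,\mathfrak a)}=\mathrm{Aut}(\mathfrak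 l)\times O(\mathfrak a)$ acts by pull-back: $(S,U)^*(\alpha,\gamma)=(U\circ\alpha\circ(S\times S),\gamma\circ(S\times S\times S))$. *)

theory Defs
  imports "HOL-Analysis.Analysis"
begin

text \<open>Real Lie algebras of dimension 5 are modelled on the vector space real^5
  (index type 5, coordinates x$1,...,x$5), with a bracket br given as a function.\<close>

type_synonym vec5 = "real ^ 5"

definition form2 :: "(vec5 \<Rightarrow> vec5 \<Rightarrow> real) \<Rightarrow> bool" where
  "form2 b \<longleftrightarrow> bilinear b \<and> (\<forall>x y. b x y = - b y x)"

definition form3 :: "(vec5 \<Rightarrow> vec5 \<Rightarrow> vec5 \<Rightarrow> real) \<Rightarrow> bool" where
  "form3 g \<longleftrightarrow> (\<forall>y z. linear (\<lambda>x. g x y z)) \<and> (\<forall>x z. linear (\<lambda>y. g x y z))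
      \<and> (\<forall>x y. linear (\<lambda>z. g x y z))
      \<and> (\<forall>x y z. g x y z = - g y x z) \<and> (\<forall>x y z. g x y z = - g x z y)"

text \<open>Chevalley--Eilenberg differential, trivial real coefficients.\<close>
definition d2 :: "(vec5 \<Rightarrow> vec5 \<Rightarrow> vec5) \<Rightarrow> (vec5 \<Rightarrow> vec5 \<Rightarrow> real) \<Rightarrow> vec5 \<Rightarrow> vec5 \<Rightarrow> vec5 \<Rightarrow> real" where
  "d2 br b x0 x1 x2 = - b (br x0 x1) x2 + b (br x0 x2) x1 - b (br x1 x2) x0"

definition d3 :: "(vec5 \<Rightarrow> vec5 \<Rightarrow> vec5) \<Rightarrow> (vec5 \<Rightarrow> vec5 \<Rightarrow> vec5 \<Rightarrow> real)
    \<Rightarrow> vec5 \<Rightarrow> vec5 \<Rightarrow> vec5 \<Rightarrow> vec5 \<Rightarrow> real" where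
  "d3 br g x0 x1 x2 x3 =
     g (br x0 x1) x2 x3 - g (br x0 x2) x1 x3 + g (br x0 x3) x1 x2
   + g (br x1 x2) x0 x3 - g (br x1 x3) x0 x2 + g (br x2 x3) x0 x1"

definition closed3 :: "(vec5 \<Rightarrow> vec5 \<Rightarrow> vec5) \<Rightarrow> (vec5 \<Rightarrow> vec5 \<Rightarrow> vec5 \<Rightarrow> real) \<Rightarrow> bool" where
  "closed3 br g \<longleftrightarrow> form3 g \<and> (\<forall>w x y z. d3 br g w x y z = 0)"

definition exact3 :: "(vec5 \<Rightarrow> vec5 \<Rightarrow> vec5) \<Rightarrow> (vec5 \<Rightarrow> vec5 \<Rightarrow> vec5 \<Rightarrow> real) \<Rightarrow> bool" where
  "exact3 br g \<longleftrightarrow> (\<exists>b. form2 b \<and> (\<forall>x y z. g x y z = d2 br b x y z))"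

definition cohom :: "(vec5 \<Rightarrow> vec5 \<Rightarrow> vec5) \<Rightarrow> (vec5 \<Rightarrow> vec5 \<Rightarrow> vec5 \<Rightarrow> real)
    \<Rightarrow> (vec5 \<Rightarrow> vec5 \<Rightarrow> vec5 \<Rightarrow> real) \<Rightarrow> bool" where
  "cohom br g g' \<longleftrightarrow> exact3 br (\<lambda>x y z. g x y z - g' x y z)"

definition lie_aut :: "(vec5 \<Rightarrow> vec5 \<Rightarrow> vec5) \<Rightarrow> (vec5 \<Rightarrow> vec5) \<Rightarrow> bool" where
  "lie_aut br S \<longleftrightarrow> linear S \<and> bij S \<and> (\<forall>x y. S (br x y) = br (S x) (S y))"

definition pullback3 :: "(vec5 \<Rightarrow> vec5) \<Rightarrow> (vec5 \<Rightarrow> vec5 \<Rightarrow> vec5 \<Rightarrow> real) \<Rightarrow> vec5 \<Rightarrow> vec5 \<Rightarrow> vec5 \<Rightarrow> real" where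
  "pullback3 S g x y z = g (S x) (S y) (S z)"

text \<open>lower_central br k is l^(k+1): l^1 = l, l^(k+1) = [l, l^k].\<close>
primrec lower_central :: "(vec5 \<Rightarrow> vec5 \<Rightarrow> vec5) \<Rightarrow> nat \<Rightarrow> vec5 set" where
  "lower_central br 0 = UNIV"
| "lower_central br (Suc k) = span {br x y | x y. y \<in> lower_central br k}"

definition centre :: "(vec5 \<Rightarrow> vec5 \<Rightarrow> vec5) \<Rightarrow> vec5 set" where
  "centre br = {z. \<forall>x. br x z = 0}"

text \<open>Admissibility of [0,gamma]; l_(k) = z(l) \<inter> l^(k+1) (for k = 0 this is z(l)).
  For k > m the condition is vacuous since l^(k+1) = 0, so we quantify over all k.\<close>
definition admissible :: "(vec5 \<Rightarrow> vec5 \<Rightarrow> vec5) \<Rightarrow> (vec5 \<Rightarrow> vec5 \<Rightarrow> vec5 \<Rightarrow> real) \<Rightarrow> bool" where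
  "admissible br g \<longleftrightarrow>
     (\<forall>k L0. L0 \<in> centre br \<inter> lower_central br k
        \<longrightarrow> (\<exists>Z0 :: vec5 \<Rightarrow> real. linear Z0 \<and>
               (\<forall>L v. v \<in> lower_central br k \<longrightarrow> g L L0 v = Z0 (br L v)))
        \<longrightarrow> L0 = 0)"

definition lie_ideal :: "(vec5 \<Rightarrow> vec5 \<Rightarrow> vec5) \<Rightarrow> vec5 set \<Rightarrow> bool" where
  "lie_ideal br I \<longleftrightarrow> subspace I \<and> (\<forall>x a. a \<in> I \<longrightarrow> br x a \<in> I)"

text \<open>Decomposable class: l = l1 (+) l2 nontrivial Lie algebra direct sum (two nonzero
  complementary ideals), projections p1, p2, and cocycles g1 on l1, g2 on l2
  (3-forms on l whose restriction to l_i is closed for the bracket of l_i)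
  such that [g] = p1^*[g1] + p2^*[g2].\<close>
definition decomposable :: "(vec5 \<Rightarrow> vec5 \<Rightarrow> vec5) \<Rightarrow> (vec5 \<Rightarrow> vec5 \<Rightarrow> vec5 \<Rightarrow> real) \<Rightarrow> bool" where
  "decomposable br g \<longleftrightarrow>
    (\<exists>L1 L2 p1 p2 g1 g2.
       lie_ideal br L1 \<and> lie_ideal br L2 \<and> L1 \<noteq> {0} \<and> L2 \<noteq> {0} \<and> L1 \<inter> L2 = {0}
     \<and> (\<forall>x. p1 x \<in> L1 \<and> p2 x \<in> L2 \<and> x = p1 x + p2 x)
     \<and> form3 g1 \<and> (\<forall>w x y z. w \<in> L1 \<and> x \<in> L1 \<and> y \<in> L1 \<and> z \<in> L1 \<longrightarrow> d3 br g1 w x y z = 0)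
     \<and> form3 g2 \<and> (\<forall>w x y z. w \<in> L2 \<and> x \<in> L2 \<and> y \<in> L2 \<and> z \<in> L2 \<longrightarrow> d3 br g2 w x y z = 0)
     \<and> cohom br g (\<lambda>x y z. pullback3 p1 g1 x y z + pullback3 p2 g2 x y z))"

text \<open>Elements of H^2_Q(l,0)_0: admissible indecomposable classes (represented by cocycles).\<close>
definition HQ0 :: "(vec5 \<Rightarrow> vec5 \<Rightarrow> vec5) \<Rightarrow> (vec5 \<Rightarrow> vec5 \<Rightarrow> vec5 \<Rightarrow> real) \<Rightarrow> bool" where
  "HQ0 br g \<longleftrightarrow> closed3 br g \<and> admissible br g \<and> \<not> decomposable br g"

text \<open>[g] and [g'] lie in the same G-orbit (O(0) is trivial): S^*[g] = [g'].\<close>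
definition same_orbit :: "(vec5 \<Rightarrow> vec5 \<Rightarrow> vec5) \<Rightarrow> (vec5 \<Rightarrow> vec5 \<Rightarrow> vec5 \<Rightarrow> real)
    \<Rightarrow> (vec5 \<Rightarrow> vec5 \<Rightarrow> vec5 \<Rightarrow> real) \<Rightarrow> bool" where
  "same_orbit br g g' \<longleftrightarrow> (\<exists>S. lie_aut br S \<and> cohom br (pullback3 S g) g')"

definition wedge3 :: "(vec5 \<Rightarrow> real) \<Rightarrow> (vec5 \<Rightarrow> real) \<Rightarrow> (vec5 \<Rightarrow> real) \<Rightarrow> vec5 \<Rightarrow> vec5 \<Rightarrow> vec5 \<Rightarrow> real" where
  "wedge3 a b c x y z =
     a x * (b y * c z - b z * c y) - a y * (b x * c z - b z * c x) + a z * (b x * c y - b y * c x)"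

definition sigma :: "5 \<Rightarrow> vec5 \<Rightarrow> real" where
  "sigma i x = x $ i"

definition br_ab :: "vec5 \<Rightarrow> vec5 \<Rightarrow> vec5" where
  "br_ab x y = 0"

text \<open>g_{5,2}: coordinates 1,2,3,4,5 correspond to X1,X2,X3,Y,Z;
  [X1,X2] = Y, [X1,X3] = Z.\<close>
definition br_g52 :: "vec5 \<Rightarrow> vec5 \<Rightarrow> vec5" where
  "br_g52 x y = (\<chi> i. if i = 4 then x$1 * y$2 - x$2 * y$1
                      else if i = 5 then x$1 * y$3 - x$3 * y$1 else 0)"

end

theory Submission
  imports Defs
begin

text \<open>
  On abelian \<open>\<real>\<^sup>5\<close> every 3-form is closed and every coboundary vanishes. Admissibility of
  \<open>\<gamma>\<close> says that \<open>\<gamma>\<close> has trivial radical, and a decomposable \<open>\<gamma>\<close> is degenerate, since one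
  summand has dimension at most 2 and every 3-form vanishes there. A 3-form on \<open>\<real>\<^sup>5\<close> is
  divisible by the 1-form \<open>\<xi>\<close> whose coefficients are the Pfaffians of its contractions with the
  basis vectors, and \<open>\<xi> \<noteq> 0\<close> when \<open>\<gamma>\<close> is nondegenerate. Then \<open>\<gamma>\<close> vanishes on \<open>ker \<xi>\<close>, and
  \<open>\<gamma>(\<cdot>, \<cdot>, f\<^sub>5)\<close> with \<open>\<xi>(f\<^sub>5) = 1\<close> is symplectic on \<open>ker \<xi>\<close>; a Darboux basis of \<open>ker \<xi>\<close>
  together with \<open>f\<^sub>5\<close> turns \<open>\<gamma>\<close> into \<open>\<gamma>\<^sub>0\<close>.

  The algebra \<open>\<gg>\<^sub>5\<^sub>,\<^sub>2\<close> has no nontrivial direct sum decomposition. For a closed \<open>\<gamma>\<close> the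
  coefficients of \<open>\<sigma>\<^sup>2\<^sup>Y\<^sup>Z\<close> and \<open>\<sigma>\<^sup>3\<^sup>Y\<^sup>Z\<close> vanish, and admissibility becomes
  \<open>\<lambda> = \<gamma>(X\<^sub>1, Y, Z) \<noteq> 0\<close>. An automorphism shearing \<open>X\<^sub>2, X\<^sub>3\<close> into the centre, together with
  a coboundary, reduces \<open>\<gamma>\<close> to \<open>\<lambda> \<sigma>\<^sup>1\<^sup>Y\<^sup>Z + c \<sigma>\<^sup>2\<^sup>3\<^sup>Y + d \<sigma>\<^sup>2\<^sup>3\<^sup>Z\<close>, and an automorphism acting by
  \<open>GL\<^sub>2\<close> on \<open>(X\<^sub>2, X\<^sub>3)\<close> brings this to \<open>\<gamma>\<^sub>1\<close> (if \<open>c = d = 0\<close>) or to \<open>\<gamma>\<^sub>2\<close>. The two are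
  inequivalent: automorphisms map \<open>Z\<close> to central vectors, the contraction of \<open>\<gamma>\<^sub>1\<close> with a
  central vector has vanishing Pfaffian, and the contraction of any representative of
  \<open>[\<gamma>\<^sub>2]\<close> with \<open>Z\<close> has Pfaffian 1 on \<open>X\<^sub>1, Y, X\<^sub>2, X\<^sub>3\<close>.
\<close>

section \<open>Coordinates and 3-forms on \<open>\<real>\<^sup>5\<close>\<close>

lemma exhaust_5:
  fixes i :: 5
  shows "i = 1 \<or> i = 2 \<or> i = 3 \<or> i = 4 \<or> i = 5"
proof (induct i)
  case (of_int z)
  then have "z = 0 \<or> z = 1 \<or> z = 2 \<or> z = 3 \<or> z = 4"
    by fastforce
  then show ?case
    by auto
qed

definition e :: "5 \<Rightarrow> vec5" where
  "e i = axis i 1"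

lemma e_nth [simp]: "e i $ j = (if j = i then 1 else 0)"
  by (simp add: e_def axis_def)

lemma vec5_eqI:
  fixes u v :: vec5
  assumes "u$1 = v$1" "u$2 = v$2" "u$3 = v$3" "u$4 = v$4" "u$5 = v$5"
  shows "u = v"
  unfolding vec_eq_iff using assms exhaust_5 by metis

lemma vec5_expand: "x = x$1 *\<^sub>R e 1 + x$2 *\<^sub>R e 2 + x$3 *\<^sub>R e 3 + x$4 *\<^sub>R e 4 + x$5 *\<^sub>R e 5"
  by (rule vec5_eqI) simp_all

lemma linear_expand5:
  assumes "linear f"
  shows "f x = x$1 *\<^sub>R f (e 1) + x$2 *\<^sub>R f (e 2) + x$3 *\<^sub>R f (e 3) + x$4 *\<^sub>R f (e 4)
    + x$5 *\<^sub>R f (e 5)"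
  by (subst vec5_expand) (simp add: linear_add[OF assms] linear_scale[OF assms])

lemma exists_e_notin_span3: "\<exists>i. e i \<notin> span {p, q, r :: vec5}"
proof (rule ccontr)
  assume "\<nexists>i. e i \<notin> span {p, q, r}"
  then have "x \<in> span {p, q, r}" for x
    by (subst vec5_expand) (intro span_add span_scale; blast)
  then have "dim (UNIV :: vec5 set) \<le> card {p, q, r}"
    by (intro dim_le_card) auto
  moreover have "card {p, q, r} \<le> 3"
    by (simp add: card_insert_if)
  ultimately show False
    by simp
qed

lemma linear_sigma: "linear (sigma i)"
  by (rule linearI) (simp_all add: sigma_def)

lemma form3_linear1: "form3 g \<Longrightarrow> linear (\<lambda>x. g x y z)"
  and form3_linear2: "form3 g \<Longrightarrow> linear (\<lambda>y. g x y z)"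
  and form3_linear3: "form3 g \<Longrightarrow> linear (\<lambda>z. g x y z)"
  unfolding form3_def by blast+

lemma form3_antisym:
  assumes "form3 g"
  shows "g x y z = - g y x z" "g x y z = - g x z y"
  using assms unfolding form3_def by blast+

lemma form3_repeated:
  assumes g: "form3 g"
  shows "g x x z = 0" "g x y y = 0" "g x y x = 0"
  using form3_antisym[OF g, of x x z] form3_antisym[OF g, of x y y] form3_antisym[OF g, of x y x]
    form3_antisym[OF g, of y x x]
  by simp_all

lemma form3_basis_swaps:
  assumes "form3 g"
  shows "g (e 2) (e 1) z = - g (e 1) (e 2) z" "g (e 3) (e 1) z = - g (e 1) (e 3) z"
   "g (e 4) (e 1) z = - g (e 1) (e 4) z" "g (e 5) (e 1) z = - g (e 1) (e 5) z"
   "g (e 3) (e 2) z = - g (e 2) (e 3) z" "g (e 4) (e 2) z = - g (e 2) (e 4) z"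
   "g (e 5) (e 2) z = - g (e 2) (e 5) z" "g (e 4) (e 3) z = - g (e 3) (e 4) z"
   "g (e 5) (e 3) z = - g (e 3) (e 5) z" "g (e 5) (e 4) z = - g (e 4) (e 5) z"
   "g x (e 2) (e 1) = - g x (e 1) (e 2)" "g x (e 3) (e 1) = - g x (e 1) (e 3)"
   "g x (e 4) (e 1) = - g x (e 1) (e 4)" "g x (e 5) (e 1) = - g x (e 1) (e 5)"
   "g x (e 3) (e 2) = - g x (e 2) (e 3)" "g x (e 4) (e 2) = - g x (e 2) (e 4)"
   "g x (e 5) (e 2) = - g x (e 2) (e 5)" "g x (e 4) (e 3) = - g x (e 3) (e 4)"
   "g x (e 5) (e 3) = - g x (e 3) (e 5)" "g x (e 5) (e 4) = - g x (e 4) (e 5)"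
  using form3_antisym[OF assms] by blast+

lemma form3_lin_simps:
  assumes g: "form3 g"
  shows "g (x + y) z w = g x z w + g y z w" "g (c *\<^sub>R x) z w = c * g x z w"
    "g z (x + y) w = g z x w + g z y w" "g z (c *\<^sub>R x) w = c * g z x w"
    "g z w (x + y) = g z w x + g z w y" "g z w (c *\<^sub>R x) = c * g z w x"
    "g 0 z w = 0" "g z 0 w = 0" "g z w 0 = 0"
    "g (x - y) z w = g x z w - g y z w" "g z (x - y) w = g z x w - g z y w"
    "g z w (x - y) = g z w x - g z w y"
  using linear_add[OF form3_linear1[OF g]] linear_scale[OF form3_linear1[OF g]]
    linear_add[OF form3_linear2[OF g]] linear_scale[OF form3_linear2[OF g]]
    linear_add[OF form3_linear3[OF g]] linear_scale[OF form3_linear3[OF g]]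
    linear_0[OF form3_linear1[OF g]] linear_0[OF form3_linear2[OF g]]
    linear_0[OF form3_linear3[OF g]] linear_diff[OF form3_linear1[OF g]]
    linear_diff[OF form3_linear2[OF g]] linear_diff[OF form3_linear3[OF g]]
  by simp_all

lemma alternating2_expand:
  assumes l1: "\<And>z. linear (\<lambda>y. h y z)" and l2: "\<And>y. linear (\<lambda>z. h y z)"
    and anti: "\<And>y z. h y z = - h z y"
  shows "h y z = h (e 1) (e 2) * (y$1*z$2 - y$2*z$1) + h (e 1) (e 3) * (y$1*z$3 - y$3*z$1)
   + h (e 1) (e 4) * (y$1*z$4 - y$4*z$1) + h (e 1) (e 5) * (y$1*z$5 - y$5*z$1)
   + h (e 2) (e 3) * (y$2*z$3 - y$3*z$2) + h (e 2) (e 4) * (y$2*z$4 - y$4*z$2)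
   + h (e 2) (e 5) * (y$2*z$5 - y$5*z$2) + h (e 3) (e 4) * (y$3*z$4 - y$4*z$3)
   + h (e 3) (e 5) * (y$3*z$5 - y$5*z$3) + h (e 4) (e 5) * (y$4*z$5 - y$5*z$4)"
proof -
  have diag: "h x x = 0" for x
    using anti[of x x] by simp
  have swap: "h (e j) (e i) = - h (e i) (e j)" for i j
    by (rule anti)
  have "h y z = y$1 * h (e 1) z + y$2 * h (e 2) z + y$3 * h (e 3) z + y$4 * h (e 4) z
      + y$5 * h (e 5) z"
    using linear_expand5[OF l1[of z], of y] by simp
  moreover have "h (e i) z = z$1 * h (e i) (e 1) + z$2 * h (e i) (e 2) + z$3 * h (e i) (e 3)
      + z$4 * h (e i) (e 4) + z$5 * h (e i) (e 5)" for i
    using linear_expand5[OF l2[of "e i"], of z] by simp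
  ultimately show ?thesis
    by (simp add: diag swap[of 1 2] swap[of 1 3] swap[of 1 4] swap[of 1 5] swap[of 2 3]
        swap[of 2 4] swap[of 2 5] swap[of 3 4] swap[of 3 5] swap[of 4 5] algebra_simps)
qed

lemma form3_contraction_eq_0:
  assumes g: "form3 g"
    and "g u (e 1) (e 2) = 0" "g u (e 1) (e 3) = 0" "g u (e 1) (e 4) = 0" "g u (e 1) (e 5) = 0"
        "g u (e 2) (e 3) = 0" "g u (e 2) (e 4) = 0" "g u (e 2) (e 5) = 0" "g u (e 3) (e 4) = 0"
        "g u (e 3) (e 5) = 0" "g u (e 4) (e 5) = 0"
  shows "g u x y = 0"
proof -
  have "g u x y = g u (e 1) (e 2) * (x$1*y$2 - x$2*y$1) + g u (e 1) (e 3) * (x$1*y$3 - x$3*y$1)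
   + g u (e 1) (e 4) * (x$1*y$4 - x$4*y$1) + g u (e 1) (e 5) * (x$1*y$5 - x$5*y$1)
   + g u (e 2) (e 3) * (x$2*y$3 - x$3*y$2) + g u (e 2) (e 4) * (x$2*y$4 - x$4*y$2)
   + g u (e 2) (e 5) * (x$2*y$5 - x$5*y$2) + g u (e 3) (e 4) * (x$3*y$4 - x$4*y$3)
   + g u (e 3) (e 5) * (x$3*y$5 - x$5*y$3) + g u (e 4) (e 5) * (x$4*y$5 - x$5*y$4)"
    by (rule alternating2_expand[where h = "g u"] form3_linear2[OF g] form3_linear3[OF g]
        form3_antisym(2)[OF g])+
  then show ?thesis
    using assms(2-11) by simp
qed

definition wedge_comb :: "real \<Rightarrow> real \<Rightarrow> real \<Rightarrow> real \<Rightarrow> real \<Rightarrow> real \<Rightarrow> real \<Rightarrow> real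
    \<Rightarrow> real \<Rightarrow> real \<Rightarrow> vec5 \<Rightarrow> vec5 \<Rightarrow> vec5 \<Rightarrow> real" where
 "wedge_comb k1 k2 k3 k4 k5 k6 k7 k8 k9 k10 x y z =
    k1 * wedge3 (sigma 1) (sigma 2) (sigma 3) x y z
  + k2 * wedge3 (sigma 1) (sigma 2) (sigma 4) x y z
  + k3 * wedge3 (sigma 1) (sigma 2) (sigma 5) x y z
  + k4 * wedge3 (sigma 1) (sigma 3) (sigma 4) x y z
  + k5 * wedge3 (sigma 1) (sigma 3) (sigma 5) x y z
  + k6 * wedge3 (sigma 1) (sigma 4) (sigma 5) x y z
  + k7 * wedge3 (sigma 2) (sigma 3) (sigma 4) x y z
  + k8 * wedge3 (sigma 2) (sigma 3) (sigma 5) x y z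
  + k9 * wedge3 (sigma 2) (sigma 4) (sigma 5) x y z
  + k10 * wedge3 (sigma 3) (sigma 4) (sigma 5) x y z"

lemma wedge_comb_e:
  "wedge_comb k1 k2 k3 k4 k5 k6 k7 k8 k9 k10 (e 1) (e 2) (e 3) = k1"
  "wedge_comb k1 k2 k3 k4 k5 k6 k7 k8 k9 k10 (e 1) (e 2) (e 4) = k2"
  "wedge_comb k1 k2 k3 k4 k5 k6 k7 k8 k9 k10 (e 1) (e 2) (e 5) = k3"
  "wedge_comb k1 k2 k3 k4 k5 k6 k7 k8 k9 k10 (e 1) (e 3) (e 4) = k4"
  "wedge_comb k1 k2 k3 k4 k5 k6 k7 k8 k9 k10 (e 1) (e 3) (e 5) = k5"
  "wedge_comb k1 k2 k3 k4 k5 k6 k7 k8 k9 k10 (e 1) (e 4) (e 5) = k6"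
  "wedge_comb k1 k2 k3 k4 k5 k6 k7 k8 k9 k10 (e 2) (e 3) (e 4) = k7"
  "wedge_comb k1 k2 k3 k4 k5 k6 k7 k8 k9 k10 (e 2) (e 3) (e 5) = k8"
  "wedge_comb k1 k2 k3 k4 k5 k6 k7 k8 k9 k10 (e 2) (e 4) (e 5) = k9"
  "wedge_comb k1 k2 k3 k4 k5 k6 k7 k8 k9 k10 (e 3) (e 4) (e 5) = k10"
  by (simp_all add: wedge_comb_def wedge3_def sigma_def)

lemma form3_expand_first:
  assumes "form3 g"
  shows "g w y z = w$1 * g (e 1) y z + w$2 * g (e 2) y z + w$3 * g (e 3) y z + w$4 * g (e 4) y z
    + w$5 * g (e 5) y z"
  using linear_expand5[OF form3_linear1[OF assms], of w] by simp

lemma form3_expand: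
  assumes g: "form3 g"
  shows "g x y z = wedge_comb (g (e 1) (e 2) (e 3)) (g (e 1) (e 2) (e 4)) (g (e 1) (e 2) (e 5))
    (g (e 1) (e 3) (e 4)) (g (e 1) (e 3) (e 5)) (g (e 1) (e 4) (e 5)) (g (e 2) (e 3) (e 4))
    (g (e 2) (e 3) (e 5)) (g (e 2) (e 4) (e 5)) (g (e 3) (e 4) (e 5)) x y z"
proof -
  have "g (e i) y z = g (e i) (e 1) (e 2) * (y$1*z$2 - y$2*z$1)
   + g (e i) (e 1) (e 3) * (y$1*z$3 - y$3*z$1) + g (e i) (e 1) (e 4) * (y$1*z$4 - y$4*z$1)
   + g (e i) (e 1) (e 5) * (y$1*z$5 - y$5*z$1) + g (e i) (e 2) (e 3) * (y$2*z$3 - y$3*z$2)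
   + g (e i) (e 2) (e 4) * (y$2*z$4 - y$4*z$2) + g (e i) (e 2) (e 5) * (y$2*z$5 - y$5*z$2)
   + g (e i) (e 3) (e 4) * (y$3*z$4 - y$4*z$3) + g (e i) (e 3) (e 5) * (y$3*z$5 - y$5*z$3)
   + g (e i) (e 4) (e 5) * (y$4*z$5 - y$5*z$4)" for i
    by (rule alternating2_expand[where h = "g (e i)"] form3_linear2[OF g] form3_linear3[OF g]
        form3_antisym(2)[OF g])+
  note rest = this
  show ?thesis
    unfolding form3_expand_first[OF g, of x] rest form3_repeated[OF g] form3_basis_swaps[OF g]
    by (simp add: wedge_comb_def wedge3_def sigma_def algebra_simps)
qed

lemma form3_eqI:
  assumes g: "form3 g" and h: "form3 h"
    and "g (e 1) (e 2) (e 3) = h (e 1) (e 2) (e 3)" "g (e 1) (e 2) (e 4) = h (e 1) (e 2) (e 4)"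
    and "g (e 1) (e 2) (e 5) = h (e 1) (e 2) (e 5)" "g (e 1) (e 3) (e 4) = h (e 1) (e 3) (e 4)"
    and "g (e 1) (e 3) (e 5) = h (e 1) (e 3) (e 5)" "g (e 1) (e 4) (e 5) = h (e 1) (e 4) (e 5)"
    and "g (e 2) (e 3) (e 4) = h (e 2) (e 3) (e 4)" "g (e 2) (e 3) (e 5) = h (e 2) (e 3) (e 5)"
    and "g (e 2) (e 4) (e 5) = h (e 2) (e 4) (e 5)" "g (e 3) (e 4) (e 5) = h (e 3) (e 4) (e 5)"
  shows "g x y z = h x y z"
  unfolding form3_expand[OF g, of x y z] form3_expand[OF h, of x y z] using assms(3-12) by simp

lemma form3_wedge3:
  assumes a: "linear a" and b: "linear b" and c: "linear c"
  shows "form3 (wedge3 a b c)"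
proof -
  have lin1: "linear (\<lambda>x. wedge3 a b c x y z)" for y z
    by (rule linearI)
      (simp_all add: wedge3_def linear_add[OF a] linear_add[OF b] linear_add[OF c]
        linear_scale[OF a] linear_scale[OF b] linear_scale[OF c] algebra_simps)
  have swap12: "wedge3 a b c x y z = - wedge3 a b c y x z"
    and swap23: "wedge3 a b c x y z = - wedge3 a b c x z y" for x y z
    by (simp_all add: wedge3_def algebra_simps)
  have "(\<lambda>y. wedge3 a b c x y z) = (\<lambda>y. - wedge3 a b c y x z)"
    and "(\<lambda>z. wedge3 a b c x y z) = (\<lambda>z. wedge3 a b c z x y)" for x y z
    by (simp_all add: fun_eq_iff wedge3_def algebra_simps)
  then have lin2: "linear (\<lambda>y. wedge3 a b c x y z)" and lin3: "linear (\<lambda>z. wedge3 a b c x y z)"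
    for x y z
    using linear_compose_neg[OF lin1] lin1 by metis+
  show ?thesis
    unfolding form3_def by (intro conjI allI lin1 lin2 lin3 swap12 swap23)
qed

lemma form3_add:
  assumes g: "form3 g" and h: "form3 h"
  shows "form3 (\<lambda>x y z. g x y z + h x y z)"
  unfolding form3_def
proof (intro conjI allI)
  fix x y z
  show "linear (\<lambda>x. g x y z + h x y z)" "linear (\<lambda>y. g x y z + h x y z)"
    "linear (\<lambda>z. g x y z + h x y z)"
    by (intro linear_compose_add form3_linear1 form3_linear2 form3_linear3 g h)+
  show "g x y z + h x y z = - (g y x z + h y x z)" "g x y z + h x y z = - (g x z y + h x z y)"
    using form3_antisym[OF g, of x y z] form3_antisym[OF h, of x y z] by simp_all
qed

lemma form3_scale:
  assumes g: "form3 g"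
  shows "form3 (\<lambda>x y z. c * g x y z)"
  unfolding form3_def
proof (intro conjI allI)
  fix x y z
  show "linear (\<lambda>x. c * g x y z)" "linear (\<lambda>y. c * g x y z)" "linear (\<lambda>z. c * g x y z)"
    using linear_compose_scale_right[OF form3_linear1[OF g], of c]
      linear_compose_scale_right[OF form3_linear2[OF g], of c]
      linear_compose_scale_right[OF form3_linear3[OF g], of c]
    by simp_all
  show "c * g x y z = - (c * g y x z)" "c * g x y z = - (c * g x z y)"
    using form3_antisym[OF g, of x y z] by simp_all
qed

lemma form3_pullback:
  assumes S: "linear S" and g: "form3 g"
  shows "form3 (pullback3 S g)"
  unfolding form3_def pullback3_def
proof (intro conjI allI)
  fix x y z
  show "linear (\<lambda>x. g (S x) (S y) (S z))" "linear (\<lambda>y. g (S x) (S y) (S z))"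
    "linear (\<lambda>z. g (S x) (S y) (S z))"
    using linear_compose[OF S form3_linear1[OF g]] linear_compose[OF S form3_linear2[OF g]]
      linear_compose[OF S form3_linear3[OF g]]
    by (simp_all add: o_def)
  show "g (S x) (S y) (S z) = - g (S y) (S x) (S z)" "g (S x) (S y) (S z) = - g (S x) (S z) (S y)"
    using form3_antisym[OF g] by blast+
qed

lemma form3_wedge_comb: "form3 (wedge_comb k1 k2 k3 k4 k5 k6 k7 k8 k9 k10)"
  unfolding wedge_comb_def[abs_def]
  by (intro form3_add form3_scale form3_wedge3 linear_sigma)

lemma form3_wedge_contraction:
  assumes f: "linear f" and g: "form3 g"
  shows "form3 (\<lambda>x y z. f x * g u y z - f y * g u x z + f z * g u x y)"
  unfolding form3_def
proof (intro conjI allI)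
  note simps = form3_lin_simps[OF g] linear_add[OF f] linear_scale[OF f] ring_distribs
  fix x y z
  show "linear (\<lambda>x. f x * g u y z - f y * g u x z + f z * g u x y)"
    "linear (\<lambda>y. f x * g u y z - f y * g u x z + f z * g u x y)"
    "linear (\<lambda>z. f x * g u y z - f y * g u x z + f z * g u x y)"
    by (rule linearI; simp add: simps)+
  have "g u y x = - g u x y" "g u z y = - g u y z" "g u z x = - g u x z"
    using form3_antisym(2)[OF g] by blast+
  then show "f x * g u y z - f y * g u x z + f z * g u x y
      = - (f y * g u x z - f x * g u y z + f z * g u y x)"
    "f x * g u y z - f y * g u x z + f z * g u x y
      = - (f x * g u z y - f z * g u x y + f y * g u x z)"
    by simp_all
qed

section \<open>Cohomologous classes and orbits\<close>

lemma form2_zero: "form2 (\<lambda>x y. 0)"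
  unfolding form2_def bilinear_def by (simp add: linear_zero)

lemma form2_add:
  assumes a: "form2 a" and b: "form2 b"
  shows "form2 (\<lambda>x y. a x y + b x y)"
proof -
  have "bilinear a" "bilinear b"
    using a b unfolding form2_def by blast+
  then have "bilinear (\<lambda>x y. a x y + b x y)"
    unfolding bilinear_def by (simp add: linear_compose_add)
  moreover have "a x y + b x y = - (a y x + b y x)" for x y
    using a b unfolding form2_def by (metis minus_add_distrib)
  ultimately show ?thesis
    unfolding form2_def by blast
qed

lemma form2_pullback:
  assumes S: "linear S" and b: "form2 b"
  shows "form2 (\<lambda>x y. b (S x) (S y))"
proof -
  have "linear (\<lambda>y. b x y)" "linear (\<lambda>x. b x y)" for x y
    using b unfolding form2_def bilinear_def by blast+
  then have "bilinear (\<lambda>x y. b (S x) (S y))"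
    unfolding bilinear_def by (auto intro: linear_compose[OF S, unfolded o_def])
  moreover have "b (S x) (S y) = - b (S y) (S x)" for x y
    using b unfolding form2_def by blast
  ultimately show ?thesis
    unfolding form2_def by blast
qed

lemma cohom_trans:
  assumes "cohom br g h" "cohom br h k"
  shows "cohom br g k"
proof -
  obtain a where a: "form2 a" "\<And>x y z. g x y z - h x y z = d2 br a x y z"
    using assms(1) unfolding cohom_def exact3_def by blast
  obtain b where b: "form2 b" "\<And>x y z. h x y z - k x y z = d2 br b x y z"
    using assms(2) unfolding cohom_def exact3_def by blast
  have "g x y z - k x y z = d2 br (\<lambda>x y. a x y + b x y) x y z" for x y z
    using a(2)[of x y z] b(2)[of x y z] by (simp add: d2_def)
  then show ?thesis
    unfolding cohom_def exact3_def using form2_add[OF a(1) b(1)] by blast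
qed

lemma cohom_pullback:
  assumes S: "lie_aut br S" and c: "cohom br g h"
  shows "cohom br (pullback3 S g) (pullback3 S h)"
proof -
  obtain a where a: "form2 a" "\<And>x y z. g x y z - h x y z = d2 br a x y z"
    using c unfolding cohom_def exact3_def by blast
  have lin: "linear S" and hom: "\<And>x y. S (br x y) = br (S x) (S y)"
    using S unfolding lie_aut_def by auto
  have "pullback3 S g x y z - pullback3 S h x y z = d2 br (\<lambda>x y. a (S x) (S y)) x y z" for x y z
    unfolding pullback3_def a(2) d2_def hom ..
  then show ?thesis
    unfolding cohom_def exact3_def using form2_pullback[OF lin a(1)] by blast
qed

lemma lie_autI:
  assumes lin: "linear S" and ker: "\<And>x. S x = 0 \<Longrightarrow> x = 0"
    and hom: "\<And>x y. S (br x y) = br (S x) (S y)"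
  shows "lie_aut br S"
proof -
  have "inj S"
    using ker linear_injective_0[OF lin] by blast
  then show ?thesis
    unfolding lie_aut_def bij_def using lin hom linear_inj_imp_surj by blast
qed

lemma lie_aut_comp:
  assumes "lie_aut br S" "lie_aut br T"
  shows "lie_aut br (S \<circ> T)"
  using assms unfolding lie_aut_def by (simp add: linear_compose bij_comp)

lemma same_orbit_trans:
  assumes "same_orbit br g h" "same_orbit br h k"
  shows "same_orbit br g k"
proof -
  obtain S where S: "lie_aut br S" "cohom br (pullback3 S g) h"
    using assms(1) unfolding same_orbit_def by blast
  obtain T where T: "lie_aut br T" "cohom br (pullback3 T h) k"
    using assms(2) unfolding same_orbit_def by blast
  have "pullback3 (S \<circ> T) g = pullback3 T (pullback3 S g)"
    by (simp add: pullback3_def fun_eq_iff)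
  then have "cohom br (pullback3 (S \<circ> T) g) k"
    using cohom_trans[OF cohom_pullback[OF T(1) S(2)] T(2)] by simp
  then show ?thesis
    unfolding same_orbit_def using lie_aut_comp[OF S(1) T(1)] by blast
qed

lemma same_orbit_pullback:
  assumes S: "lie_aut br S" and eq: "\<And>x y z. pullback3 S g x y z = h x y z"
  shows "same_orbit br g h"
proof -
  have "pullback3 S g x y z - h x y z = d2 br (\<lambda>x y. 0) x y z" for x y z
    by (simp add: eq d2_def)
  then show ?thesis
    unfolding same_orbit_def cohom_def exact3_def using S form2_zero by blast
qed

section \<open>The abelian Lie algebra \<open>\<real>\<^sup>5\<close>\<close>

definition nondegenerate3 :: "(vec5 \<Rightarrow> vec5 \<Rightarrow> vec5 \<Rightarrow> real) \<Rightarrow> bool" where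
  "nondegenerate3 g \<longleftrightarrow> (\<forall>u. (\<forall>x y. g u x y = 0) \<longrightarrow> u = 0)"

lemma form3_vanishes_on_span2:
  assumes h: "form3 h" and "a \<in> span {b1, b2}" "b \<in> span {b1, b2}" "c \<in> span {b1, b2}"
  shows "h a b c = 0"
proof -
  have rep: "\<exists>k m. v = k *\<^sub>R b1 + m *\<^sub>R b2" if "v \<in> span {b1, b2}" for v
  proof -
    have "v \<in> {x. \<exists>k. x - k *\<^sub>R b1 \<in> span {b2}}"
      using that unfolding span_insert[of b1 "{b2}"] .
    then obtain k where "v - k *\<^sub>R b1 \<in> range (\<lambda>m. m *\<^sub>R b2)"
      unfolding span_singleton by blast
    then obtain m where "v - k *\<^sub>R b1 = m *\<^sub>R b2"
      by blast
    then have "v = k *\<^sub>R b1 + m *\<^sub>R b2"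
      by (simp add: algebra_simps)
    then show ?thesis
      by blast
  qed
  obtain k1 m1 where a: "a = k1 *\<^sub>R b1 + m1 *\<^sub>R b2"
    using rep assms(2) by blast
  obtain k2 m2 where b: "b = k2 *\<^sub>R b1 + m2 *\<^sub>R b2"
    using rep assms(3) by blast
  obtain k3 m3 where c: "c = k3 *\<^sub>R b1 + m3 *\<^sub>R b2"
    using rep assms(4) by blast
  show ?thesis
    unfolding a b c by (simp add: form3_lin_simps[OF h] form3_repeated[OF h])
qed

lemma subset_span2_of_dim_le_2:
  fixes A :: "'a::euclidean_space set"
  assumes "dim A \<le> 2"
  obtains b1 b2 where "A \<subseteq> span {b1, b2}"
proof -
  obtain B where B: "B \<subseteq> A" "independent B" "A \<subseteq> span B" "card B = dim A"
    by (rule basis_exists)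
  have "finite B"
    using independent_bound[OF B(2)] by blast
  have "card B = 0 \<or> card B = 1 \<or> card B = 2"
    using B(4) assms by linarith
  then have "\<exists>b1 b2. B \<subseteq> {b1, b2}"
  proof (elim disjE)
    assume "card B = 0"
    then show ?thesis
      using \<open>finite B\<close> by simp
  next
    assume "card B = 1"
    then obtain b where "B = {b}"
      by (metis One_nat_def card_1_singleton_iff)
    then show ?thesis
      by blast
  next
    assume "card B = 2"
    then obtain b1 b2 where "B = {b1, b2}"
      by (metis card_2_iff)
    then show ?thesis
      by blast
  qed
  then obtain b1 b2 where "B \<subseteq> {b1, b2}"
    by blast
  then have "A \<subseteq> span {b1, b2}"
    using B(3) span_mono by (meson order_trans)
  then show ?thesis
    by (rule that)
qed

lemma direct_sum_form3_degenerate: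
  assumes A: "subspace A" and AB: "A \<inter> B = {0}" and nA: "A \<noteq> {0}" and dA: "dim A \<le> 2"
    and h: "form3 h" and h': "form3 h'"
    and split: "\<And>x. q x \<in> A \<and> q' x \<in> B \<and> x = q x + q' x"
    and g: "\<And>x y z. g x y z = h (q x) (q y) (q z) + h' (q' x) (q' y) (q' z)"
  shows "\<not> nondegenerate3 g"
proof -
  obtain u where u: "u \<in> A" "u \<noteq> 0"
    using nA subspace_0[OF A] by blast
  have uq: "q u \<in> A" "q' u \<in> B" "u = q u + q' u"
    using split[of u] by blast+
  then have "q' u \<in> A"
    using subspace_diff[OF A u(1) uq(1)] by (metis add_diff_cancel_left')
  then have q'u: "q' u = 0"
    using uq(2) AB by blast
  then have qu: "q u = u"
    using uq(3) by (metis add.right_neutral)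
  obtain b1 b2 where A2: "A \<subseteq> span {b1, b2}"
    using subset_span2_of_dim_le_2[OF dA] by blast
  have "g u x y = 0" for x y
  proof -
    have "q x \<in> A" "q y \<in> A"
      using split by blast+
    then have "h u (q x) (q y) = 0"
      using form3_vanishes_on_span2[OF h] A2 u(1) by blast
    then show ?thesis
      using g[of u x y] qu q'u form3_lin_simps(7)[OF h'] by simp
  qed
  then show ?thesis
    unfolding nondegenerate3_def using u by blast
qed

lemma lower_central_ab_Suc: "lower_central br_ab (Suc k) \<subseteq> {0}"
proof -
  have "{br_ab x y |x y. y \<in> lower_central br_ab k} \<subseteq> {0}"
    by (auto simp: br_ab_def)
  then have "lower_central br_ab (Suc k) \<subseteq> span {0}"
    unfolding lower_central.simps by (rule span_mono)
  then show ?thesis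
    by simp
qed

lemma lie_aut_ab_iff: "lie_aut br_ab S \<longleftrightarrow> linear S \<and> bij S"
  unfolding lie_aut_def br_ab_def using linear_0 by auto

lemma closed3_ab_iff: "closed3 br_ab g \<longleftrightarrow> form3 g"
  unfolding closed3_def d3_def br_ab_def by (auto simp: form3_lin_simps)

lemma admissible_condition_ab_iff:
  assumes g: "form3 g"
  shows "(\<exists>Z0 :: vec5 \<Rightarrow> real. linear Z0 \<and>
      (\<forall>L v. v \<in> lower_central br_ab 0 \<longrightarrow> g L u v = Z0 (br_ab L v)))
    \<longleftrightarrow> (\<forall>x y. g u x y = 0)"
proof
  assume "\<exists>Z0 :: vec5 \<Rightarrow> real. linear Z0 \<and>
    (\<forall>L v. v \<in> lower_central br_ab 0 \<longrightarrow> g L u v = Z0 (br_ab L v))"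
  then have "g L u v = 0" for L v
    by (auto simp: br_ab_def linear_0)
  then show "\<forall>x y. g u x y = 0"
    using form3_antisym(1)[OF g] by (metis neg_equal_0_iff_equal)
next
  assume "\<forall>x y. g u x y = 0"
  then have "g L u v = 0" for L v
    using form3_antisym(1)[OF g] by (metis neg_equal_0_iff_equal)
  then show "\<exists>Z0 :: vec5 \<Rightarrow> real. linear Z0 \<and>
    (\<forall>L v. v \<in> lower_central br_ab 0 \<longrightarrow> g L u v = Z0 (br_ab L v))"
    using linear_zero by (intro exI[of _ "\<lambda>_. 0"]) auto
qed

lemma admissible_ab_iff:
  assumes g: "form3 g"
  shows "admissible br_ab g \<longleftrightarrow> nondegenerate3 g"
  unfolding admissible_def nondegenerate3_def
proof (intro iffI allI impI)
  fix u
  assume adm: "\<forall>k L0. L0 \<in> centre br_ab \<inter> lower_central br_ab k \<longrightarrow>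
    (\<exists>Z0. linear Z0 \<and> (\<forall>L v. v \<in> lower_central br_ab k \<longrightarrow> g L L0 v = Z0 (br_ab L v)))
    \<longrightarrow> L0 = 0"
    and u: "\<forall>x y. g u x y = 0"
  have "u \<in> centre br_ab \<inter> lower_central br_ab 0"
    by (simp add: centre_def br_ab_def)
  then show "u = 0"
    using adm[THEN spec[where x = 0], THEN spec[where x = u]]
      admissible_condition_ab_iff[OF g, of u, THEN iffD2, OF u]
    by blast
next
  fix k L0
  assume nd: "\<forall>u. (\<forall>x y. g u x y = 0) \<longrightarrow> u = 0"
    and L0: "L0 \<in> centre br_ab \<inter> lower_central br_ab k"
    and Z0: "\<exists>Z0. linear Z0 \<and> (\<forall>L v. v \<in> lower_central br_ab k \<longrightarrow> g L L0 v = Z0 (br_ab L v))"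
  show "L0 = 0"
  proof (cases k)
    case 0
    then show ?thesis
      using nd admissible_condition_ab_iff[OF g, of L0] Z0 by blast
  next
    case (Suc k')
    then show ?thesis
      using L0 lower_central_ab_Suc by blast
  qed
qed

lemma dim_direct_sum_vec5:
  fixes L1 L2 :: "vec5 set"
  assumes "subspace L1" "subspace L2" "L1 \<inter> L2 = {0}"
    and p: "\<forall>x. p1 x \<in> L1 \<and> p2 x \<in> L2 \<and> x = p1 x + p2 x"
  shows "dim L1 + dim L2 = 5"
proof -
  have "z \<in> {x + y |x y. x \<in> L1 \<and> y \<in> L2}" for z
    using p[rule_format, of z] by blast
  then have "{x + y |x y. x \<in> L1 \<and> y \<in> L2} = UNIV"
    by blast
  then show ?thesis
    using dim_sums_Int[OF assms(1,2)] assms(3) by simp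
qed

lemma decomposable_ab_degenerate:
  assumes "decomposable br_ab g"
  shows "\<not> nondegenerate3 g"
proof -
  obtain L1 L2 p1 p2 g1 g2 where
    I: "lie_ideal br_ab L1" and J: "lie_ideal br_ab L2" and n1: "L1 \<noteq> {0}" and n2: "L2 \<noteq> {0}"
    and IJ: "L1 \<inter> L2 = {0}" and p: "\<forall>x. p1 x \<in> L1 \<and> p2 x \<in> L2 \<and> x = p1 x + p2 x"
    and g1: "form3 g1" and g2: "form3 g2"
    and co: "cohom br_ab g (\<lambda>x y z. pullback3 p1 g1 x y z + pullback3 p2 g2 x y z)"
    using assms unfolding decomposable_def by (elim exE conjE) (rule that)
  have sI: "subspace L1" and sJ: "subspace L2"
    using I J unfolding lie_ideal_def by blast+
  obtain b where "form2 b"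
    and b: "\<And>x y z. g x y z - (pullback3 p1 g1 x y z + pullback3 p2 g2 x y z) = d2 br_ab b x y z"
    using co unfolding cohom_def exact3_def by blast
  then have "bilinear b"
    unfolding form2_def by blast
  then have G: "g x y z = g1 (p1 x) (p1 y) (p1 z) + g2 (p2 x) (p2 y) (p2 z)" for x y z
    using b[of x y z] bilinear_lzero[of b] unfolding d2_def br_ab_def pullback3_def by simp
  have "dim L1 + dim L2 = 5"
    by (rule dim_direct_sum_vec5[OF sI sJ IJ p])
  then consider "dim L1 \<le> 2" | "dim L2 \<le> 2"
    by linarith
  then show ?thesis
  proof cases
    case 1
    show ?thesis
      using direct_sum_form3_degenerate[OF sI IJ n1 1 g1 g2] p G by blast
  next
    case 2
    have "L2 \<inter> L1 = {0}"
      using IJ by blast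
    moreover have "p2 x \<in> L2 \<and> p1 x \<in> L1 \<and> x = p2 x + p1 x" for x
      using p[rule_format, of x] by (simp add: add.commute)
    moreover have "g x y z = g2 (p2 x) (p2 y) (p2 z) + g1 (p1 x) (p1 y) (p1 z)" for x y z
      using G[of x y z] by simp
    ultimately show ?thesis
      using direct_sum_form3_degenerate[OF sJ _ n2 2 g2 g1] by blast
  qed
qed

lemma HQ0_ab_iff: "HQ0 br_ab g \<longleftrightarrow> form3 g \<and> nondegenerate3 g"
  unfolding HQ0_def using closed3_ab_iff admissible_ab_iff decomposable_ab_degenerate by blast

section \<open>Normal form of nondegenerate 3-forms\<close>

abbreviation gamma0 :: "vec5 \<Rightarrow> vec5 \<Rightarrow> vec5 \<Rightarrow> real" where
  "gamma0 \<equiv> \<lambda>x y z. wedge3 (sigma 1) (sigma 2) (sigma 5) x y z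
                  + wedge3 (sigma 3) (sigma 4) (sigma 5) x y z"

lemma gamma0_wedge_comb: "gamma0 x y z = wedge_comb 0 0 1 0 0 0 0 0 0 1 x y z"
  by (simp add: wedge_comb_def)

lemma form3_gamma0: "form3 gamma0"
  by (intro form3_add form3_wedge3 linear_sigma)

lemma nondegenerate3_gamma0: "nondegenerate3 gamma0"
  unfolding nondegenerate3_def
proof (intro allI impI)
  fix u :: vec5
  assume "\<forall>x y. gamma0 u x y = 0"
  then have "gamma0 u (e 2) (e 5) = 0" "gamma0 u (e 1) (e 5) = 0" "gamma0 u (e 4) (e 5) = 0"
    "gamma0 u (e 3) (e 5) = 0" "gamma0 u (e 1) (e 2) = 0"
    by blast+
  then show "u = 0"
    by (intro vec5_eqI) (simp_all add: wedge3_def sigma_def)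
qed

lemma frame_pullback_gamma0:
  assumes g: "form3 g"
    and "g f1 f2 f3 = 0" "g f1 f2 f4 = 0" "g f1 f3 f4 = 0" "g f2 f3 f4 = 0"
    and "g f1 f2 f5 = 1" "g f1 f3 f5 = 0" "g f1 f4 f5 = 0" "g f2 f3 f5 = 0" "g f2 f4 f5 = 0"
    and "g f3 f4 f5 = 1"
  obtains S where "linear S" "bij S" "\<And>x y z. pullback3 S g x y z = gamma0 x y z"
proof -
  define S where "S x = x$1 *\<^sub>R f1 + x$2 *\<^sub>R f2 + x$3 *\<^sub>R f3 + x$4 *\<^sub>R f4 + x$5 *\<^sub>R f5"
    for x :: vec5
  have S: "linear S"
    by (rule linearI) (simp_all add: S_def algebra_simps scaleR_add_left)
  have Se: "S (e 1) = f1" "S (e 2) = f2" "S (e 3) = f3" "S (e 4) = f4" "S (e 5) = f5"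
    by (simp_all add: S_def)
  have pb: "pullback3 S g x y z = gamma0 x y z" for x y z
    unfolding gamma0_wedge_comb
    by (rule form3_eqI[OF form3_pullback[OF S g] form3_wedge_comb])
      (simp_all only: pullback3_def Se wedge_comb_e assms(2-11))
  have "inj S"
    unfolding linear_injective_0[OF S]
  proof (intro allI impI)
    fix v
    assume "S v = 0"
    then have "\<forall>x y. gamma0 v x y = 0"
      using pb[symmetric] by (simp add: pullback3_def form3_lin_simps[OF g])
    then show "v = 0"
      using nondegenerate3_gamma0 unfolding nondegenerate3_def by blast
  qed
  then have "bij S"
    unfolding bij_def using linear_inj_imp_surj[OF S] by blast
  then show ?thesis
    using that S pb by blast
qed

lemma alternating_antisym:
  assumes \<beta>: "bilinear \<beta>" and alt: "\<And>x. \<beta> x x = (0 :: real)"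
  shows "\<beta> y x = - \<beta> x y"
proof -
  have "\<beta> x y + \<beta> y x = 0"
    using alt[of x] alt[of y] alt[of "x + y"] by (simp add: bilinear_ladd[OF \<beta>] bilinear_radd[OF \<beta>])
  then show ?thesis
    by linarith
qed

lemma symplectic_complement:
  fixes \<beta> :: "'a::real_vector \<Rightarrow> 'a \<Rightarrow> real"
  assumes \<beta>: "bilinear \<beta>" and alt: "\<And>x. \<beta> x x = 0" and f12: "\<beta> f1 f2 = 1"
  shows "\<beta> f1 (w - \<beta> w f2 *\<^sub>R f1 + \<beta> w f1 *\<^sub>R f2) = 0"
    "\<beta> f2 (w - \<beta> w f2 *\<^sub>R f1 + \<beta> w f1 *\<^sub>R f2) = 0"
  using f12 alternating_antisym[OF \<beta> alt, of w f1] alternating_antisym[OF \<beta> alt, of w f2]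
    alternating_antisym[OF \<beta> alt, of f1 f2]
  by (simp_all add: bilinear_radd[OF \<beta>] bilinear_rsub[OF \<beta>] bilinear_rmul[OF \<beta>] alt)

lemma symplectic_frame:
  fixes \<beta> :: "'a::real_vector \<Rightarrow> 'a \<Rightarrow> real"
  assumes \<beta>: "bilinear \<beta>" and alt: "\<And>x. \<beta> x x = 0" and K: "subspace K"
    and big: "\<And>a b. \<not> K \<subseteq> span {a, b}"
    and nd: "\<And>w. w \<in> K \<Longrightarrow> w \<noteq> 0 \<Longrightarrow> \<exists>w'\<in>K. \<beta> w w' \<noteq> 0"
  obtains f1 f2 f3 f4 where "f1 \<in> K" "f2 \<in> K" "f3 \<in> K" "f4 \<in> K"
    "\<beta> f1 f2 = 1" "\<beta> f3 f4 = 1" "\<beta> f1 f3 = 0" "\<beta> f1 f4 = 0" "\<beta> f2 f3 = 0" "\<beta> f2 f4 = 0"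
proof -
  note lin = bilinear_rmul[OF \<beta>] bilinear_radd[OF \<beta>] bilinear_rsub[OF \<beta>]
  obtain f1 where f1: "f1 \<in> K" "f1 \<noteq> 0"
    using big[of 0 0] by auto
  obtain w1 where w1: "w1 \<in> K" "\<beta> f1 w1 \<noteq> 0"
    using nd[OF f1] by blast
  define f2 where "f2 = (1 / \<beta> f1 w1) *\<^sub>R w1"
  have f2: "f2 \<in> K" "\<beta> f1 f2 = 1"
    unfolding f2_def using w1 subspace_scale[OF K] by (simp_all add: lin)
  define \<rho> where "\<rho> w = w - \<beta> w f2 *\<^sub>R f1 + \<beta> w f1 *\<^sub>R f2" for w
  have \<rho>: "\<rho> w \<in> K" "\<beta> f1 (\<rho> w) = 0" "\<beta> f2 (\<rho> w) = 0" if "w \<in> K" for w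
    unfolding \<rho>_def using that f1(1) f2 symplectic_complement[OF \<beta> alt f2(2)]
    by (simp_all add: subspace_add[OF K] subspace_diff[OF K] subspace_scale[OF K])
  obtain v where v: "v \<in> K" "v \<notin> span {f1, f2}"
    using big[of f1 f2] by blast
  have "\<rho> v \<noteq> 0"
  proof
    assume "\<rho> v = 0"
    then have "v = \<beta> v f2 *\<^sub>R f1 - \<beta> v f1 *\<^sub>R f2"
      unfolding \<rho>_def by (simp add: algebra_simps)
    also have "\<dots> \<in> span {f1, f2}"
      by (intro span_diff span_scale span_base) simp_all
    finally show False
      using v(2) by blast
  qed
  then obtain w3 where w3: "w3 \<in> K" "\<beta> (\<rho> v) w3 \<noteq> 0"
    using nd \<rho>(1)[OF v(1)] by blast
  have "\<beta> (\<rho> v) (\<rho> w3) = \<beta> (\<rho> v) w3"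
    unfolding \<rho>_def[of w3] using \<rho>[OF v(1)] alternating_antisym[OF \<beta> alt, of f1 "\<rho> v"]
      alternating_antisym[OF \<beta> alt, of f2 "\<rho> v"]
    by (simp add: lin)
  define f4 where "f4 = (1 / \<beta> (\<rho> v) w3) *\<^sub>R \<rho> w3"
  have "f4 \<in> K" "\<beta> (\<rho> v) f4 = 1" "\<beta> f1 f4 = 0" "\<beta> f2 f4 = 0"
    unfolding f4_def using \<rho>[OF w3(1)] w3(2) \<open>\<beta> (\<rho> v) (\<rho> w3) = \<beta> (\<rho> v) w3\<close>
      subspace_scale[OF K]
    by (simp_all add: lin)
  then show ?thesis
    using that f1(1) f2 \<rho>[OF v(1)] by blast
qed

text \<open>Writing a 3-form \<open>g\<close> as the contraction of the volume form with a 2-vector \<open>P\<close>,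
  \<open>pfaffian_form g\<close> is dual to \<open>P \<and> P\<close>.\<close>
definition pfaffian4 :: "(vec5 \<Rightarrow> vec5 \<Rightarrow> real) \<Rightarrow> vec5 \<Rightarrow> vec5 \<Rightarrow> vec5 \<Rightarrow> vec5 \<Rightarrow> real" where
  "pfaffian4 \<omega> a b c d = \<omega> a b * \<omega> c d - \<omega> a c * \<omega> b d + \<omega> a d * \<omega> b c"

definition pfaffian_form :: "(vec5 \<Rightarrow> vec5 \<Rightarrow> vec5 \<Rightarrow> real) \<Rightarrow> vec5 \<Rightarrow> real" where
  "pfaffian_form g v = v$1 * pfaffian4 (g (e 1)) (e 2) (e 3) (e 4) (e 5)
    - v$2 * pfaffian4 (g (e 2)) (e 1) (e 3) (e 4) (e 5)
    + v$3 * pfaffian4 (g (e 3)) (e 1) (e 2) (e 4) (e 5)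
    - v$4 * pfaffian4 (g (e 4)) (e 1) (e 2) (e 3) (e 5)
    + v$5 * pfaffian4 (g (e 5)) (e 1) (e 2) (e 3) (e 4)"

lemma pfaffian_form_linear: "linear (pfaffian_form g)"
  by (rule linearI) (simp_all add: pfaffian_form_def algebra_simps)

lemma pfaffian_form_expand:
  "pfaffian_form g w = w$1 * pfaffian_form g (e 1) + w$2 * pfaffian_form g (e 2)
    + w$3 * pfaffian_form g (e 3) + w$4 * pfaffian_form g (e 4) + w$5 * pfaffian_form g (e 5)"
  using linear_expand5[OF pfaffian_form_linear, of g w] by simp

lemma pfaffian_form_e:
  assumes g: "form3 g"
  shows
  "pfaffian_form g (e 1) = g (e 1) (e 2) (e 3) * g (e 1) (e 4) (e 5)
    - g (e 1) (e 2) (e 4) * g (e 1) (e 3) (e 5) + g (e 1) (e 2) (e 5) * g (e 1) (e 3) (e 4)"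
  "pfaffian_form g (e 2) = g (e 1) (e 2) (e 3) * g (e 2) (e 4) (e 5)
    - g (e 1) (e 2) (e 4) * g (e 2) (e 3) (e 5) + g (e 1) (e 2) (e 5) * g (e 2) (e 3) (e 4)"
  "pfaffian_form g (e 3) = g (e 1) (e 2) (e 3) * g (e 3) (e 4) (e 5)
    - g (e 1) (e 3) (e 4) * g (e 2) (e 3) (e 5) + g (e 1) (e 3) (e 5) * g (e 2) (e 3) (e 4)"
  "pfaffian_form g (e 4) = g (e 1) (e 2) (e 4) * g (e 3) (e 4) (e 5)
    - g (e 1) (e 3) (e 4) * g (e 2) (e 4) (e 5) + g (e 1) (e 4) (e 5) * g (e 2) (e 3) (e 4)"
  "pfaffian_form g (e 5) = g (e 1) (e 2) (e 5) * g (e 3) (e 4) (e 5)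
    - g (e 1) (e 3) (e 5) * g (e 2) (e 4) (e 5) + g (e 1) (e 4) (e 5) * g (e 2) (e 3) (e 5)"
  by (simp_all add: pfaffian_form_def pfaffian4_def form3_basis_swaps[OF g] algebra_simps)

text \<open>Every 3-form on \<open>\<real>\<^sup>5\<close> is divisible by its Pfaffian form.\<close>
lemma pfaffian_form_wedge_contraction:
  assumes g: "form3 g"
  shows "pfaffian_form g w * g x y z
    = pfaffian_form g x * g w y z - pfaffian_form g y * g w x z + pfaffian_form g z * g w x y"
proof -
  note simps = pfaffian_form_expand[of g w] form3_expand_first[OF g, of w] pfaffian_form_e[OF g]
    form3_repeated[OF g] form3_basis_swaps[OF g]
  show ?thesis
    by (rule form3_eqI[OF form3_scale[OF g] form3_wedge_contraction[OF pfaffian_form_linear g]])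
      (simp only: simps, algebra)+
qed

text \<open>Up to sign, \<open>dual4 g a b c d\<close> is the vector dual to the restriction of \<open>g\<close> to
  \<open>span {a, b, c, d}\<close>; for the coordinate hyperplanes these are the contractions of the
  2-vector \<open>P\<close> dual to \<open>g\<close>, and \<open>g (dual4 \<dots>)\<close> is a combination of the Pfaffians.\<close>
definition dual4 :: "(vec5 \<Rightarrow> vec5 \<Rightarrow> vec5 \<Rightarrow> real) \<Rightarrow> vec5 \<Rightarrow> vec5 \<Rightarrow> vec5 \<Rightarrow> vec5 \<Rightarrow> vec5" where
  "dual4 g a b c d = g b c d *\<^sub>R a - g a c d *\<^sub>R b + g a b d *\<^sub>R c - g a b c *\<^sub>R d"

lemma pfaffian_form_eq_0_radical:
  assumes g: "form3 g" and P0: "\<And>m. pfaffian_form g (e m) = 0"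
  shows "g (dual4 g (e 2) (e 3) (e 4) (e 5)) x y = 0" "g (dual4 g (e 1) (e 3) (e 4) (e 5)) x y = 0"
    "g (dual4 g (e 1) (e 2) (e 4) (e 5)) x y = 0" "g (dual4 g (e 1) (e 2) (e 3) (e 5)) x y = 0"
proof -
  note P = P0[of 1, unfolded pfaffian_form_e[OF g]] P0[of 2, unfolded pfaffian_form_e[OF g]]
    P0[of 3, unfolded pfaffian_form_e[OF g]] P0[of 4, unfolded pfaffian_form_e[OF g]]
    P0[of 5, unfolded pfaffian_form_e[OF g]]
  note simps = dual4_def form3_lin_simps[OF g] form3_repeated[OF g] form3_basis_swaps[OF g]
  show "g (dual4 g (e 2) (e 3) (e 4) (e 5)) x y = 0" "g (dual4 g (e 1) (e 3) (e 4) (e 5)) x y = 0"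
    "g (dual4 g (e 1) (e 2) (e 4) (e 5)) x y = 0" "g (dual4 g (e 1) (e 2) (e 3) (e 5)) x y = 0"
    by (rule form3_contraction_eq_0[OF g]; simp only: simps; (algebra | use P in algebra))+
qed

lemma pfaffian_form_nonzero:
  assumes g: "form3 g" and nd: "nondegenerate3 g"
  obtains m where "pfaffian_form g (e m) \<noteq> 0"
proof -
  have radical: "k = 0" if "\<And>x y. g k x y = 0" for k
    using nd that unfolding nondegenerate3_def by blast
  have "\<exists>m. pfaffian_form g (e m) \<noteq> 0"
  proof (rule ccontr)
    assume "\<nexists>m. pfaffian_form g (e m) \<noteq> 0"
    then have "dual4 g (e 2) (e 3) (e 4) (e 5) = 0" "dual4 g (e 1) (e 3) (e 4) (e 5) = 0"
      "dual4 g (e 1) (e 2) (e 4) (e 5) = 0" "dual4 g (e 1) (e 2) (e 3) (e 5) = 0"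
      using radical pfaffian_form_eq_0_radical[OF g] by blast+
    then have "dual4 g (e 2) (e 3) (e 4) (e 5) $ 2 = 0" "dual4 g (e 2) (e 3) (e 4) (e 5) $ 3 = 0"
      "dual4 g (e 2) (e 3) (e 4) (e 5) $ 4 = 0" "dual4 g (e 2) (e 3) (e 4) (e 5) $ 5 = 0"
      "dual4 g (e 1) (e 3) (e 4) (e 5) $ 3 = 0" "dual4 g (e 1) (e 3) (e 4) (e 5) $ 4 = 0"
      "dual4 g (e 1) (e 3) (e 4) (e 5) $ 5 = 0" "dual4 g (e 1) (e 2) (e 4) (e 5) $ 4 = 0"
      "dual4 g (e 1) (e 2) (e 4) (e 5) $ 5 = 0" "dual4 g (e 1) (e 2) (e 3) (e 5) $ 5 = 0"
      by simp_all
    then have "g (e 3) (e 4) (e 5) = 0" "g (e 2) (e 4) (e 5) = 0" "g (e 2) (e 3) (e 5) = 0"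
      "g (e 2) (e 3) (e 4) = 0" "g (e 1) (e 4) (e 5) = 0" "g (e 1) (e 3) (e 5) = 0"
      "g (e 1) (e 3) (e 4) = 0" "g (e 1) (e 2) (e 5) = 0" "g (e 1) (e 2) (e 4) = 0"
      "g (e 1) (e 2) (e 3) = 0"
      by (simp_all add: dual4_def)
    then have "g (e 1) x y = 0" for x y
      unfolding form3_expand[OF g, of "e 1" x y] by (simp add: wedge_comb_def)
    then show False
      using radical[of "e 1"] e_nth[of 1 1] by simp
  qed
  then show ?thesis
    using that by blast
qed

lemma kernel_not_subset_span2:
  assumes \<xi>: "linear \<xi>" "\<xi> f = (1 :: real)"
  shows "\<not> {v :: vec5. \<xi> v = 0} \<subseteq> span {a, b}"
proof
  assume sub: "{v. \<xi> v = 0} \<subseteq> span {a, b}"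
  obtain i where i: "e i \<notin> span {f, a, b}"
    using exists_e_notin_span3 by blast
  have "e i - \<xi> (e i) *\<^sub>R f \<in> {v. \<xi> v = 0}"
    using \<xi> by (simp add: linear_diff linear_scale)
  moreover have "span {a, b} \<subseteq> span {f, a, b}"
    by (rule span_mono) blast
  ultimately have "e i - \<xi> (e i) *\<^sub>R f \<in> span {f, a, b}"
    using sub by blast
  then have "e i - \<xi> (e i) *\<^sub>R f + \<xi> (e i) *\<^sub>R f \<in> span {f, a, b}"
    by (rule span_add) (intro span_scale span_base, simp)
  then show False
    using i by simp
qed

lemma nondegenerate3_on_kernel:
  assumes g: "form3 g" and nd: "nondegenerate3 g" and \<xi>: "linear \<xi>" "\<xi> f = (1 :: real)"
    and vanish: "\<And>x y z. \<xi> x = 0 \<Longrightarrow> \<xi> y = 0 \<Longrightarrow> \<xi> z = 0 \<Longrightarrow> g x y z = 0"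
    and w: "\<xi> w = 0" "w \<noteq> 0"
  shows "\<exists>w'. \<xi> w' = 0 \<and> g w w' f \<noteq> 0"
proof (rule ccontr)
  assume "\<nexists>w'. \<xi> w' = 0 \<and> g w w' f \<noteq> 0"
  then have gwf: "g w v f = 0" if "\<xi> v = 0" for v
    using that by blast
  define pr where "pr v = v - \<xi> v *\<^sub>R f" for v
  have pr: "\<xi> (pr v) = 0" for v
    unfolding pr_def using \<xi> by (simp add: linear_diff linear_scale)
  have "g w x y = 0" for x y
  proof -
    have "g w x y = g w (pr x + \<xi> x *\<^sub>R f) (pr y + \<xi> y *\<^sub>R f)"
      by (simp add: pr_def)
    also have "\<dots> = g w (pr x) (pr y) + \<xi> y * g w (pr x) f - \<xi> x * g w (pr y) f"
      using form3_antisym(2)[OF g, of w f "pr y"]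
      by (simp add: form3_lin_simps[OF g] form3_repeated[OF g] algebra_simps)
    also have "\<dots> = 0"
      using vanish[OF w(1) pr pr] gwf[OF pr] gwf[OF pr] by simp
    finally show ?thesis .
  qed
  then show False
    using nd w(2) unfolding nondegenerate3_def by blast
qed

lemma nondegenerate3_normal_form:
  assumes g: "form3 g" and nd: "nondegenerate3 g"
  obtains S where "linear S" "bij S" "\<And>x y z. pullback3 S g x y z = gamma0 x y z"
proof -
  let ?\<xi> = "pfaffian_form g"
  obtain m where m: "?\<xi> (e m) \<noteq> 0"
    using pfaffian_form_nonzero[OF g nd] by blast
  define f5 where "f5 = (1 / ?\<xi> (e m)) *\<^sub>R e m"
  have \<xi>f5: "?\<xi> f5 = 1"
    unfolding f5_def using m by (simp add: linear_scale[OF pfaffian_form_linear])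
  define K where "K = {v. ?\<xi> v = 0}"
  have vanish: "g x y z = 0" if "?\<xi> x = 0" "?\<xi> y = 0" "?\<xi> z = 0" for x y z
    using pfaffian_form_wedge_contraction[OF g, of f5 x y z] that \<xi>f5 by simp
  have "bilinear (\<lambda>x y. g x y f5)"
    unfolding bilinear_def using form3_linear1[OF g] form3_linear2[OF g] by blast
  moreover have "g x x f5 = 0" for x
    by (rule form3_repeated(1)[OF g])
  moreover have "subspace K"
    unfolding K_def by (rule linear_subspace_kernel[OF pfaffian_form_linear])
  moreover have "\<not> K \<subseteq> span {a, b}" for a b
    unfolding K_def by (rule kernel_not_subset_span2[OF pfaffian_form_linear \<xi>f5])
  moreover have "\<exists>w'\<in>K. g w w' f5 \<noteq> 0" if "w \<in> K" "w \<noteq> 0" for w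
    using nondegenerate3_on_kernel[OF g nd pfaffian_form_linear \<xi>f5 vanish] that
    unfolding K_def by blast
  ultimately obtain f1 f2 f3 f4 where f: "f1 \<in> K" "f2 \<in> K" "f3 \<in> K" "f4 \<in> K"
    and symp: "g f1 f2 f5 = 1" "g f3 f4 f5 = 1" "g f1 f3 f5 = 0" "g f1 f4 f5 = 0" "g f2 f3 f5 = 0"
      "g f2 f4 f5 = 0"
    by (rule symplectic_frame) blast
  have "g f1 f2 f3 = 0" "g f1 f2 f4 = 0" "g f1 f3 f4 = 0" "g f2 f3 f4 = 0"
    using vanish f unfolding K_def by simp_all
  from frame_pullback_gamma0[OF g this symp(1) symp(3) symp(4) symp(5) symp(6) symp(2)] show ?thesis
    using that by blast
qed

lemma HQ0_gamma0: "HQ0 br_ab gamma0"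
  using HQ0_ab_iff form3_gamma0 nondegenerate3_gamma0 by blast

lemma HQ0_ab_same_orbit_gamma0:
  assumes "HQ0 br_ab g"
  shows "same_orbit br_ab g gamma0"
proof -
  have "form3 g" "nondegenerate3 g"
    using assms HQ0_ab_iff by blast+
  then obtain S where "linear S" "bij S" and pb: "\<And>x y z. pullback3 S g x y z = gamma0 x y z"
    by (rule nondegenerate3_normal_form) blast
  then have "lie_aut br_ab S"
    using lie_aut_ab_iff by blast
  then show ?thesis
    by (rule same_orbit_pullback) (rule pb)
qed

section \<open>The Lie algebra \<open>\<gg>\<^sub>5\<^sub>,\<^sub>2\<close>\<close>

lemma br_g52_nth [simp]:
  "br_g52 x y $ 1 = 0" "br_g52 x y $ 2 = 0" "br_g52 x y $ 3 = 0"
  "br_g52 x y $ 4 = x$1 * y$2 - x$2 * y$1" "br_g52 x y $ 5 = x$1 * y$3 - x$3 * y$1"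
  by (simp_all add: br_g52_def)

lemma br_g52_e [simp]:
  "br_g52 (e 1) (e 2) = e 4" "br_g52 (e 1) (e 3) = e 5"
  "br_g52 (e 2) (e 1) = - e 4" "br_g52 (e 3) (e 1) = - e 5"
  "br_g52 (e 1) (e 1) = 0" "br_g52 (e 2) (e 2) = 0" "br_g52 (e 3) (e 3) = 0"
  "br_g52 (e 2) (e 3) = 0" "br_g52 (e 3) (e 2) = 0"
  "br_g52 (e 4) y = 0" "br_g52 (e 5) y = 0" "br_g52 y (e 4) = 0" "br_g52 y (e 5) = 0"
  by (rule vec5_eqI; simp)+

lemma centre_g52: "centre br_g52 = {v. v$1 = 0 \<and> v$2 = 0 \<and> v$3 = 0}"
proof (intro set_eqI iffI)
  fix v
  assume "v \<in> centre br_g52"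
  then have "br_g52 (e 1) v = 0" "br_g52 (e 2) v = 0"
    unfolding centre_def by blast+
  then have "br_g52 (e 1) v $ 4 = 0" "br_g52 (e 1) v $ 5 = 0" "br_g52 (e 2) v $ 4 = 0"
    by simp_all
  then show "v \<in> {v. v$1 = 0 \<and> v$2 = 0 \<and> v$3 = 0}"
    by simp
next
  fix v :: vec5
  assume "v \<in> {v. v$1 = 0 \<and> v$2 = 0 \<and> v$3 = 0}"
  then show "v \<in> centre br_g52"
    unfolding centre_def by (auto intro: vec5_eqI)
qed

lemma lower_central_g52_Suc: "lower_central br_g52 (Suc k) \<subseteq> centre br_g52"
proof -
  have "subspace (centre br_g52)"
    unfolding centre_g52 subspace_def by simp
  then show ?thesis
    unfolding lower_central.simps by (intro span_minimal) (auto simp: centre_g52)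
qed

lemma lower_central_g52_Suc_Suc: "lower_central br_g52 (Suc (Suc k)) \<subseteq> {0}"
proof -
  have "{br_g52 x y |x y. y \<in> lower_central br_g52 (Suc k)} \<subseteq> {0}"
    using lower_central_g52_Suc[of k] unfolding centre_def by blast
  then have "lower_central br_g52 (Suc (Suc k)) \<subseteq> span {0}"
    unfolding lower_central.simps(2)[of _ "Suc k"] by (rule span_mono)
  then show ?thesis
    by simp
qed

lemma e45_lower_central_g52: "e 4 \<in> lower_central br_g52 (Suc 0)" "e 5 \<in> lower_central br_g52 (Suc 0)"
proof -
  have "br_g52 (e 1) (e 2) \<in> {br_g52 x y |x y. y \<in> lower_central br_g52 0}"
    "br_g52 (e 1) (e 3) \<in> {br_g52 x y |x y. y \<in> lower_central br_g52 0}"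
    unfolding lower_central.simps(1) by blast+
  then have "br_g52 (e 1) (e 2) \<in> lower_central br_g52 (Suc 0)"
    "br_g52 (e 1) (e 3) \<in> lower_central br_g52 (Suc 0)"
    unfolding lower_central.simps(2) by (blast intro: span_base)+
  then show "e 4 \<in> lower_central br_g52 (Suc 0)" "e 5 \<in> lower_central br_g52 (Suc 0)"
    by simp_all
qed

lemma closed3_g52_coeffs:
  assumes "closed3 br_g52 g"
  shows "g (e 2) (e 4) (e 5) = 0" "g (e 3) (e 4) (e 5) = 0"
proof -
  have g: "form3 g" and d: "\<And>w x y z. d3 br_g52 g w x y z = 0"
    using assms unfolding closed3_def by blast+
  note simps = form3_lin_simps[OF g] form3_repeated[OF g] form3_basis_swaps[OF g]
  show "g (e 2) (e 4) (e 5) = 0"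
    using d[of "e 1" "e 2" "e 3" "e 4"] unfolding d3_def by (simp add: simps)
  show "g (e 3) (e 4) (e 5) = 0"
    using d[of "e 1" "e 2" "e 3" "e 5"] unfolding d3_def by (simp add: simps)
qed

lemma linear_central_g52:
  assumes "linear f" "v \<in> centre br_g52"
  shows "f v = v$4 *\<^sub>R f (e 4) + v$5 *\<^sub>R f (e 5)"
  using linear_expand5[OF assms(1), of v] assms(2) unfolding centre_g52 by simp

lemma admissible_g52_coeff:
  assumes closed: "closed3 br_g52 g" and adm: "admissible br_g52 g"
  shows "g (e 1) (e 4) (e 5) \<noteq> 0"
proof
  assume g145: "g (e 1) (e 4) (e 5) = 0"
  have g: "form3 g"
    using closed unfolding closed3_def by blast
  note simps = form3_repeated[OF g] form3_basis_swaps[OF g]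
  have "g L (e 4) v = 0" if "v \<in> lower_central br_g52 (Suc 0)" for L v
  proof -
    have "v \<in> centre br_g52"
      using that lower_central_g52_Suc[of 0] by auto
    then have "g L (e 4) v = v$5 * g L (e 4) (e 5)"
      using linear_central_g52[OF form3_linear3[OF g]] by (simp add: simps)
    also have "g L (e 4) (e 5) = 0"
      using form3_expand_first[OF g, of L "e 4" "e 5"] g145 closed3_g52_coeffs[OF closed]
      by (simp add: simps)
    finally show ?thesis
      by simp
  qed
  then have "\<exists>Z0 :: vec5 \<Rightarrow> real. linear Z0 \<and>
      (\<forall>L v. v \<in> lower_central br_g52 (Suc 0) \<longrightarrow> g L (e 4) v = Z0 (br_g52 L v))"
    by (intro exI[of _ "\<lambda>_. 0"]) (simp add: linear_zero)
  moreover have "e 4 \<in> centre br_g52 \<inter> lower_central br_g52 (Suc 0)"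
    using e45_lower_central_g52 by (simp add: centre_g52)
  ultimately have "e 4 = 0"
    using adm unfolding admissible_def by blast
  then show False
    using e_nth[of 4 4] by simp
qed

lemma admissible_g52I:
  assumes g: "form3 g" and g145: "g (e 1) (e 4) (e 5) \<noteq> 0"
  shows "admissible br_g52 g"
  unfolding admissible_def
proof (intro allI impI)
  fix k L0
  assume L0: "L0 \<in> centre br_g52 \<inter> lower_central br_g52 k"
    and "\<exists>Z0. linear Z0 \<and> (\<forall>L v. v \<in> lower_central br_g52 k \<longrightarrow> g L L0 v = Z0 (br_g52 L v))"
  then obtain Z0 where Z0: "linear Z0"
    and HZ: "\<And>L v. v \<in> lower_central br_g52 k \<Longrightarrow> g L L0 v = Z0 (br_g52 L v)"
    by blast
  show "L0 = 0"
  proof (cases "k \<le> 1")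
    case True
    then have "e 4 \<in> lower_central br_g52 k" "e 5 \<in> lower_central br_g52 k"
      using e45_lower_central_g52 by (cases k; simp)+
    then have "g (e 1) L0 (e 4) = 0" "g (e 1) L0 (e 5) = 0"
      using HZ linear_0[OF Z0] by simp_all
    moreover have "g (e 1) L0 y = L0$4 * g (e 1) (e 4) y + L0$5 * g (e 1) (e 5) y" for y
      using linear_central_g52[OF form3_linear2[OF g]] L0 by simp
    ultimately have "L0$5 * g (e 1) (e 4) (e 5) = 0" "L0$4 * g (e 1) (e 4) (e 5) = 0"
      by (simp_all add: form3_repeated[OF g] form3_basis_swaps[OF g])
    then show ?thesis
      using g145 L0 unfolding centre_g52 by (intro vec5_eqI) simp_all
  next
    case False
    then obtain k' where "k = Suc (Suc k')"
      by (metis One_nat_def Suc_pred less_Suc0 not_le not_less_eq)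
    then show ?thesis
      using L0 lower_central_g52_Suc_Suc by blast
  qed
qed

lemma lie_ideal_g52_e45:
  assumes I: "lie_ideal br_g52 I" and u: "u \<in> I" "u$1 \<noteq> 0"
  shows "e 4 \<in> I" "e 5 \<in> I"
proof -
  have sI: "subspace I" and "br_g52 (e 2) u \<in> I" "br_g52 (e 3) u \<in> I"
    using I u unfolding lie_ideal_def by blast+
  moreover have "e 4 = (- 1 / u$1) *\<^sub>R br_g52 (e 2) u" "e 5 = (- 1 / u$1) *\<^sub>R br_g52 (e 3) u"
    using u(2) by (intro vec5_eqI; simp)+
  ultimately show "e 4 \<in> I" "e 5 \<in> I"
    by (metis subspace_scale)+
qed

lemma lie_ideal_g52_complement:
  assumes I: "lie_ideal br_g52 I" and J: "lie_ideal br_g52 J" and IJ: "I \<inter> J = {0}"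
    and u: "u \<in> I" "u$1 \<noteq> 0"
  shows "J \<subseteq> {0}"
proof
  fix w
  assume w: "w \<in> J"
  have sI: "subspace I"
    using I unfolding lie_ideal_def by blast
  note e45 = lie_ideal_g52_e45[OF I u]
  have w1: "w$1 = 0"
  proof (rule ccontr)
    assume "w$1 \<noteq> 0"
    then have "e 4 \<in> I \<inter> J"
      using lie_ideal_g52_e45[OF J w] e45 by blast
    then show False
      using IJ e_nth[of 4 4] by auto
  qed
  have "br_g52 u w \<in> J" "- br_g52 w u \<in> I"
    using I J u w subspace_neg unfolding lie_ideal_def by blast+
  moreover have "- br_g52 w u = br_g52 u w"
    by (rule vec5_eqI) simp_all
  ultimately have "br_g52 u w = 0"
    using IJ by auto
  then have "br_g52 u w $ 4 = 0" "br_g52 u w $ 5 = 0"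
    by simp_all
  then have "u$1 * w$2 = 0" "u$1 * w$3 = 0"
    using w1 by simp_all
  then have "w = w$4 *\<^sub>R e 4 + w$5 *\<^sub>R e 5"
    using u(2) w1 by (intro vec5_eqI) simp_all
  also have "\<dots> \<in> I"
    using e45 by (intro subspace_add[OF sI] subspace_scale[OF sI])
  finally show "w \<in> {0}"
    using w IJ by blast
qed

lemma not_decomposable_g52: "\<not> decomposable br_g52 g"
proof
  assume "decomposable br_g52 g"
  then obtain L1 L2 p1 p2 where I: "lie_ideal br_g52 L1" and J: "lie_ideal br_g52 L2"
    and n1: "L1 \<noteq> {0}" and n2: "L2 \<noteq> {0}" and IJ: "L1 \<inter> L2 = {0}"
    and p: "\<forall>x. p1 x \<in> L1 \<and> p2 x \<in> L2 \<and> x = p1 x + p2 x"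
    unfolding decomposable_def by (elim exE conjE) (rule that)
  have "L2 \<subseteq> {0}" if "u \<in> L1" "u$1 \<noteq> 0" for u
    by (rule lie_ideal_g52_complement[OF I J IJ that])
  moreover have "L1 \<subseteq> {0}" if "u \<in> L2" "u$1 \<noteq> 0" for u
    using IJ by (intro lie_ideal_g52_complement[OF J I _ that]) blast
  moreover have "0 \<in> L1" "0 \<in> L2"
    using I J subspace_0 unfolding lie_ideal_def by blast+
  ultimately have "(p1 (e 1))$1 = 0" "(p2 (e 1))$1 = 0"
    using n1 n2 p by blast+
  moreover have "e 1 = p1 (e 1) + p2 (e 1)"
    using p by blast
  then have "(p1 (e 1))$1 + (p2 (e 1))$1 = 1"
    by (metis e_nth vector_add_component)
  ultimately show False
    by simp
qed

lemma HQ0_g52_iff: "HQ0 br_g52 g \<longleftrightarrow> closed3 br_g52 g \<and> g (e 1) (e 4) (e 5) \<noteq> 0"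
  unfolding HQ0_def closed3_def
  using admissible_g52_coeff admissible_g52I not_decomposable_g52 closed3_def by blast

abbreviation gamma1 :: "vec5 \<Rightarrow> vec5 \<Rightarrow> vec5 \<Rightarrow> real" where
  "gamma1 \<equiv> wedge3 (sigma 1) (sigma 4) (sigma 5)"

abbreviation gamma2 :: "vec5 \<Rightarrow> vec5 \<Rightarrow> vec5 \<Rightarrow> real" where
  "gamma2 \<equiv> \<lambda>x y z. wedge3 (sigma 1) (sigma 4) (sigma 5) x y z
                  + wedge3 (sigma 2) (sigma 3) (sigma 5) x y z"

lemma gamma1_wedge_comb: "gamma1 x y z = wedge_comb 0 0 0 0 0 1 0 0 0 0 x y z"
  and gamma2_wedge_comb: "gamma2 x y z = wedge_comb 0 0 0 0 0 1 0 1 0 0 x y z"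
  by (simp_all add: wedge_comb_def)

lemma HQ0_gamma1: "HQ0 br_g52 gamma1"
  and HQ0_gamma2: "HQ0 br_g52 gamma2"
  unfolding HQ0_g52_iff closed3_def
  by (auto intro!: form3_add form3_wedge3 linear_sigma)
    (simp_all add: d3_def wedge3_def sigma_def algebra_simps)

lemma not_same_orbit_gamma1_gamma2: "\<not> same_orbit br_g52 gamma1 gamma2"
proof
  assume "same_orbit br_g52 gamma1 gamma2"
  then obtain S b where S: "lie_aut br_g52 S" and b: "form2 b"
    and hb: "\<And>x y z. pullback3 S gamma1 x y z - gamma2 x y z = d2 br_g52 b x y z"
    unfolding same_orbit_def cohom_def exact3_def by blast
  have "bilinear b" "b (e 5) (e 5) = - b (e 5) (e 5)"
    using b unfolding form2_def by blast+
  then have b0: "b 0 y = 0" "b (e 5) (e 5) = 0" for y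
    by (simp_all add: bilinear_lzero)
  have lin: "linear S" and "surj S" and hom: "\<And>x y. S (br_g52 x y) = br_g52 (S x) (S y)"
    using S unfolding lie_aut_def bij_def by auto
  define c where "c = S (e 5)"
  have "br_g52 x c = 0" for x
  proof -
    obtain x' where "x = S x'"
      using \<open>surj S\<close> by (metis surjD)
    then show ?thesis
      unfolding c_def using hom[of x' "e 5"] linear_0[OF lin] by simp
  qed
  then have "br_g52 (e 2) c $ 4 = 0"
    by simp
  then have c1: "c$1 = 0"
    by simp
  define \<omega> where "\<omega> x y = gamma2 x y (e 5) + d2 br_g52 b x y (e 5)" for x y
  have \<omega>: "gamma1 (S x) (S y) c = \<omega> x y" for x y
    using hb[of x y "e 5"] unfolding \<omega>_def pullback3_def c_def by simp
  have "pfaffian4 (\<lambda>x y. gamma1 x y c) (S (e 1)) (S (e 4)) (S (e 2)) (S (e 3)) = 0"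
    unfolding pfaffian4_def wedge3_def sigma_def c1 by algebra
  then have "pfaffian4 \<omega> (e 1) (e 4) (e 2) (e 3) = 0"
    by (simp add: pfaffian4_def \<omega>)
  moreover have "pfaffian4 \<omega> (e 1) (e 4) (e 2) (e 3) = 1"
    unfolding pfaffian4_def \<omega>_def d2_def by (simp add: wedge3_def sigma_def b0)
  ultimately show False
    by simp
qed

definition shear_g52 :: "real \<Rightarrow> real \<Rightarrow> real \<Rightarrow> vec5 \<Rightarrow> vec5" where
  "shear_g52 p q r x = x + (q * x$3) *\<^sub>R e 4 + (p * x$2 + r * x$3) *\<^sub>R e 5"

lemma shear_g52_nth [simp]:
  "shear_g52 p q r x $ 1 = x$1" "shear_g52 p q r x $ 2 = x$2" "shear_g52 p q r x $ 3 = x$3"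
  "shear_g52 p q r x $ 4 = x$4 + q * x$3" "shear_g52 p q r x $ 5 = x$5 + p * x$2 + r * x$3"
  by (simp_all add: shear_g52_def)

lemma lie_aut_shear_g52: "lie_aut br_g52 (shear_g52 p q r)"
proof (rule lie_autI)
  show "linear (shear_g52 p q r)"
    by (rule linearI; rule vec5_eqI) (simp_all add: algebra_simps)
  show "x = 0" if "shear_g52 p q r x = 0" for x
  proof -
    have "shear_g52 p q r x $ i = 0" for i
      using that by simp
    from this[of 1] this[of 2] this[of 3] this[of 4] this[of 5] show "x = 0"
      by (intro vec5_eqI) simp_all
  qed
  show "shear_g52 p q r (br_g52 x y) = br_g52 (shear_g52 p q r x) (shear_g52 p q r y)" for x y
    by (rule vec5_eqI) simp_all
qed

lemma shear_g52_e:
  "shear_g52 p q r (e 1) = e 1" "shear_g52 p q r (e 2) = e 2 + p *\<^sub>R e 5"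
  "shear_g52 p q r (e 3) = e 3 + q *\<^sub>R e 4 + r *\<^sub>R e 5"
  "shear_g52 p q r (e 4) = e 4" "shear_g52 p q r (e 5) = e 5"
  by (rule vec5_eqI; simp)+

text \<open>The automorphism of \<open>\<gg>\<^sub>5\<^sub>,\<^sub>2\<close> induced by \<open>A = [[a, b], [c, d]] \<in> GL\<^sub>2\<close> acting on
  \<open>span {X\<^sub>2, X\<^sub>3}\<close> and, through the bracket with \<open>X\<^sub>1\<close>, on \<open>span {Y, Z}\<close>.\<close>
definition gl2_g52 :: "real \<Rightarrow> real \<Rightarrow> real \<Rightarrow> real \<Rightarrow> vec5 \<Rightarrow> vec5" where
  "gl2_g52 a b c d x = x$1 *\<^sub>R e 1 + (a * x$2 + b * x$3) *\<^sub>R e 2 + (c * x$2 + d * x$3) *\<^sub>R e 3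
    + (a * x$4 + b * x$5) *\<^sub>R e 4 + (c * x$4 + d * x$5) *\<^sub>R e 5"

lemma gl2_g52_nth [simp]:
  "gl2_g52 a b c d x $ 1 = x$1" "gl2_g52 a b c d x $ 2 = a * x$2 + b * x$3"
  "gl2_g52 a b c d x $ 3 = c * x$2 + d * x$3" "gl2_g52 a b c d x $ 4 = a * x$4 + b * x$5"
  "gl2_g52 a b c d x $ 5 = c * x$4 + d * x$5"
  by (simp_all add: gl2_g52_def)

lemma det2_nonzero_solution_zero:
  fixes a b c d u v :: real
  assumes "a * u + b * v = 0" "c * u + d * v = 0" "a * d - b * c \<noteq> 0"
  shows "u = 0 \<and> v = 0"
proof -
  have "u * (a * d - b * c) = d * (a * u + b * v) - b * (c * u + d * v)"
    and "v * (a * d - b * c) = a * (c * u + d * v) - c * (a * u + b * v)"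
    by (simp_all add: algebra_simps)
  then have "u * (a * d - b * c) = 0" "v * (a * d - b * c) = 0"
    using assms(1,2) by simp_all
  then show ?thesis
    using assms(3) by simp
qed

lemma lie_aut_gl2_g52:
  assumes det: "a * d - b * c \<noteq> 0"
  shows "lie_aut br_g52 (gl2_g52 a b c d)"
proof (rule lie_autI)
  show "linear (gl2_g52 a b c d)"
    by (rule linearI; rule vec5_eqI) (simp_all add: algebra_simps)
  show "x = 0" if "gl2_g52 a b c d x = 0" for x
  proof -
    have "gl2_g52 a b c d x $ i = 0" for i
      using that by simp
    from this[of 1] this[of 2] this[of 3] this[of 4] this[of 5] show "x = 0"
      using det2_nonzero_solution_zero[of a "x$2" b "x$3" c d] det2_nonzero_solution_zero[of a "x$4" b "x$5" c d] det
      by (intro vec5_eqI) simp_all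
  qed
  show "gl2_g52 a b c d (br_g52 x y) = br_g52 (gl2_g52 a b c d x) (gl2_g52 a b c d y)" for x y
    by (rule vec5_eqI) (simp_all add: algebra_simps)
qed

text \<open>The shear absorbs the coefficients of \<open>\<sigma>\<^sup>1\<^sup>2\<^sup>Y\<close>, \<open>\<sigma>\<^sup>1\<^sup>3\<^sup>Z\<close> and \<open>\<sigma>\<^sup>1\<^sup>3\<^sup>Y + \<sigma>\<^sup>1\<^sup>2\<^sup>Z\<close>;
  what is left of \<open>\<sigma>\<^sup>1\<^sup>2\<^sup>3\<close> and \<open>\<sigma>\<^sup>1\<^sup>2\<^sup>Z - \<sigma>\<^sup>1\<^sup>3\<^sup>Y\<close> is the coboundary of
  \<open>t\<^sub>1 \<sigma>\<^sup>Y \<and> \<sigma>\<^sup>3 + t\<^sub>2 \<sigma>\<^sup>Y \<and> \<sigma>\<^sup>Z\<close>.\<close>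
lemma same_orbit_g52_reduced:
  assumes g: "form3 g" and z: "g (e 2) (e 4) (e 5) = 0" "g (e 3) (e 4) (e 5) = 0"
    and l: "g (e 1) (e 4) (e 5) \<noteq> 0"
  shows "same_orbit br_g52 g
    (wedge_comb 0 0 0 0 0 (g (e 1) (e 4) (e 5)) (g (e 2) (e 3) (e 4)) (g (e 2) (e 3) (e 5)) 0 0)"
proof -
  define lam where "lam = g (e 1) (e 4) (e 5)"
  define p where "p = g (e 1) (e 2) (e 4) / lam"
  define q where "q = - g (e 1) (e 3) (e 5) / lam"
  define r where "r = (g (e 1) (e 3) (e 4) + g (e 1) (e 2) (e 5)) / lam"
  define t1 where "t1 = - (g (e 1) (e 2) (e 3) + q * g (e 1) (e 2) (e 4) + r * g (e 1) (e 2) (e 5)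
    - p * g (e 1) (e 3) (e 5) - p * q * lam)"
  define t2 where "t2 = - g (e 1) (e 2) (e 5)"
  define b where "b x y = t1 * (x$4 * y$3 - x$3 * y$4) + t2 * (x$4 * y$5 - x$5 * y$4)" for x y :: vec5
  have lam0: "lam \<noteq> 0"
    using l unfolding lam_def .
  have S: "lie_aut br_g52 (shear_g52 p q r)"
    by (rule lie_aut_shear_g52)
  then have "linear (shear_g52 p q r)"
    unfolding lie_aut_def by blast
  note simps = form3_lin_simps[OF g] form3_repeated[OF g] form3_basis_swaps[OF g]
  have pb: "pullback3 (shear_g52 p q r) g x y z = wedge_comb (- t1) 0 (- t2) t2 0 lam
      (g (e 2) (e 3) (e 4)) (g (e 2) (e 3) (e 5)) 0 0 x y z" for x y z
    by (rule form3_eqI[OF form3_pullback[OF \<open>linear (shear_g52 p q r)\<close> g] form3_wedge_comb])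
      (simp_all add: pullback3_def shear_g52_e simps wedge_comb_e z t1_def t2_def lam_def[symmetric],
       simp_all add: p_def q_def r_def field_simps lam0)
  have "form2 b"
    unfolding form2_def bilinear_def b_def
    by (intro conjI allI linearI) (simp_all add: algebra_simps)
  moreover have "d2 br_g52 b x y z = wedge_comb (- t1) 0 (- t2) t2 0 0 0 0 0 0 x y z" for x y z
    unfolding d2_def b_def wedge_comb_def wedge3_def sigma_def br_g52_nth by algebra
  ultimately have "cohom br_g52 (pullback3 (shear_g52 p q r) g)
      (wedge_comb 0 0 0 0 0 lam (g (e 2) (e 3) (e 4)) (g (e 2) (e 3) (e 5)) 0 0)"
    unfolding cohom_def exact3_def pb by (auto simp: wedge_comb_def algebra_simps)
  then show ?thesis
    unfolding same_orbit_def lam_def using S by blast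
qed

lemma same_orbit_gamma1:
  assumes "lam \<noteq> 0"
  shows "same_orbit br_g52 (wedge_comb 0 0 0 0 0 lam 0 0 0 0) gamma1"
proof -
  have S: "lie_aut br_g52 (gl2_g52 (1 / lam) 0 0 1)"
    using assms by (intro lie_aut_gl2_g52) simp
  then have lin: "linear (gl2_g52 (1 / lam) 0 0 1)"
    unfolding lie_aut_def by blast
  have "pullback3 (gl2_g52 (1 / lam) 0 0 1) (wedge_comb 0 0 0 0 0 lam 0 0 0 0) x y z
      = gamma1 x y z" for x y z
    unfolding gamma1_wedge_comb
    by (rule form3_eqI[OF form3_pullback[OF lin form3_wedge_comb] form3_wedge_comb])
      (simp_all add: pullback3_def wedge_comb_def wedge3_def sigma_def assms)
  then show ?thesis
    by (rule same_orbit_pullback[OF S])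
qed

text \<open>\<open>det A = 1 / \<lambda>\<close> normalises the coefficient of \<open>\<sigma>\<^sup>1\<^sup>Y\<^sup>Z\<close>, and
  \<open>(c, d) A = (0, \<lambda>)\<close> turns \<open>c \<sigma>\<^sup>2\<^sup>3\<^sup>Y + d \<sigma>\<^sup>2\<^sup>3\<^sup>Z\<close> into \<open>\<sigma>\<^sup>2\<^sup>3\<^sup>Z\<close>.\<close>
lemma same_orbit_gamma2:
  assumes l: "lam \<noteq> 0" and cd: "c \<noteq> 0 \<or> d \<noteq> 0"
  shows "same_orbit br_g52 (wedge_comb 0 0 0 0 0 lam c d 0 0) gamma2"
proof -
  define N where "N = c * c + d * d"
  have N0: "N \<noteq> 0"
    using cd unfolding N_def by (metis add_nonneg_eq_0_iff mult_eq_0_iff zero_le_square)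
  define A where "A = d / (lam * lam)"
  define B where "B = lam * c / N"
  define C where "C = - c / (lam * lam)"
  define D where "D = lam * d / N"
  have "A * D - B * C = (c * c + d * d) / (lam * N)"
    unfolding A_def B_def C_def D_def using l N0 by (simp add: field_simps)
  also have "\<dots> = 1 / lam"
    using N0 unfolding N_def[symmetric] by simp
  finally have "A * D - B * C = 1 / lam" .
  then have S: "lie_aut br_g52 (gl2_g52 A B C D)"
    using l by (intro lie_aut_gl2_g52) simp
  then have lin: "linear (gl2_g52 A B C D)"
    unfolding lie_aut_def by blast
  have "pullback3 (gl2_g52 A B C D) (wedge_comb 0 0 0 0 0 lam c d 0 0) x y z = gamma2 x y z"
    for x y z
    unfolding gamma2_wedge_comb
    by (rule form3_eqI[OF form3_pullback[OF lin form3_wedge_comb] form3_wedge_comb])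
      (simp_all add: pullback3_def wedge_comb_def wedge3_def sigma_def,
       simp_all add: A_def B_def C_def D_def field_simps l N0, simp_all add: N_def algebra_simps)
  then show ?thesis
    by (rule same_orbit_pullback[OF S])
qed

lemma HQ0_g52_same_orbit:
  assumes "HQ0 br_g52 g"
  shows "same_orbit br_g52 g gamma1 \<or> same_orbit br_g52 g gamma2"
proof -
  have closed: "closed3 br_g52 g" and l: "g (e 1) (e 4) (e 5) \<noteq> 0"
    using assms unfolding HQ0_g52_iff by blast+
  then have g: "form3 g"
    unfolding closed3_def by blast
  note reduced = same_orbit_g52_reduced[OF g closed3_g52_coeffs[OF closed] l]
  show ?thesis
  proof (cases "g (e 2) (e 3) (e 4) = 0 \<and> g (e 2) (e 3) (e 5) = 0")
    case True
    then show ?thesis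
      using reduced same_orbit_gamma1[OF l] same_orbit_trans by fastforce
  next
    case False
    then show ?thesis
      using reduced same_orbit_gamma2[OF l] same_orbit_trans by blast
  qed
qed

theorem proposition5:
  shows "(HQ0 br_ab (\<lambda>x y z. wedge3 (sigma 1) (sigma 2) (sigma 5) x y z
                             + wedge3 (sigma 3) (sigma 4) (sigma 5) x y z)
          \<and> (\<forall>g. HQ0 br_ab g \<longrightarrow>
               same_orbit br_ab g (\<lambda>x y z. wedge3 (sigma 1) (sigma 2) (sigma 5) x y z
                                        + wedge3 (sigma 3) (sigma 4) (sigma 5) x y z)))
       \<and> (HQ0 br_g52 (wedge3 (sigma 1) (sigma 4) (sigma 5))
          \<and> HQ0 br_g52 (\<lambda>x y z. wedge3 (sigma 1) (sigma 4) (sigma 5) x y z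
                               + wedge3 (sigma 2) (sigma 3) (sigma 5) x y z)
          \<and> \<not> same_orbit br_g52 (wedge3 (sigma 1) (sigma 4) (sigma 5))
                 (\<lambda>x y z. wedge3 (sigma 1) (sigma 4) (sigma 5) x y z
                        + wedge3 (sigma 2) (sigma 3) (sigma 5) x y z)
          \<and> (\<forall>g. HQ0 br_g52 g \<longrightarrow>
               same_orbit br_g52 g (wedge3 (sigma 1) (sigma 4) (sigma 5))
             \<or> same_orbit br_g52 g (\<lambda>x y z. wedge3 (sigma 1) (sigma 4) (sigma 5) x y z
                                         + wedge3 (sigma 2) (sigma 3) (sigma 5) x y z)))"
  using HQ0_gamma0 HQ0_ab_same_orbit_gamma0 HQ0_gamma1 HQ0_gamma2 not_same_orbit_gamma1_gamma2
    HQ0_g52_same_orbit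
  by blast

end
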